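(* Suppose $1/n\ll\varepsilon\ll\varepsilon_1\ll\eta_1\ll\tau\ll\varepsilon_3\ll\eta_2\ll 1$ and let $G$ be an $\varepsilon$-extremal digraph on $n$ vertices with $\delta^0(G)\geq n/2$. Then there is a partition of $V(G)$ into sets $A,B,S,T$ of sizes $a,b,s,t$ satisfying one of the following: (1) conditions (P1)–(P7); (2) conditions (Q1)–(Q8) together with $a\leq b$; (3) conditions (R1)–(R9).
   Context: Digraphs have no loops and at most one edge in each direction between two vertices. $\delta^0(G)$ is the minimum semidegree (minimum over vertices of the minimum of in- and outdegree). For $X\subseteq V(G)$ and a vertex $x$, $d^+_X(x)=|N^+(x)\cap X|$, $d^-_X(x)=|N^-(x)\cap X|$, and $d^\pm_X(x)\geq c$ means both $d^+_X(x)\geq c$ and $d^-_X(x)\geq c$. $E(X,Y)$ is the set of edges $xy$ with $x\in X,y\in Y$, $e(X,Y)=|E(X,Y)|$; $G[X]$ is the induced subdigraph; $G[X,Y]$ is the digraph on $X\cup Y$ with edge set $E(X,Y)\cup E(Y,X)$. $G$ is $\varepsilon$-extremal if there is a partition $A,B,S,T$ of $V(G)$ with sizes $a,b,s,t$ such that $|a-b|,|s-t|\leq1$ and $e(A\cup S,A\cup T)<\varepsilon n^2$. Conditions for a partition $A,B,S,T$ of $V(G)$ with sizes $a,b,s,t$: (P1) $\lfloor n/2\rfloor-\varepsilon_3 n\leq s,t\leq \lceil n/2\rceil+\varepsilon_3 n$; (P2) $\delta^0(G[S]),\delta^0(G[T])\geq \eta_2 n$; (P3) $d^\pm_S(x)\geq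 n/2-\varepsilon_3 n$ for all but at most $\varepsilon_3 n$ vertices $x\in S$; (P4) $d^\pm_T(x)\geq n/2-\varepsilon_3 n$ for all but at most $\varepsilon_3 n$ vertices $x\in T$; (P5) $a+b\leq\varepsilon_3 n$; (P6) for all $x\in A$: $d^-_T(x),d^+_S(x)>n/2-3\eta_2 n$ and $d^-_S(x),d^+_T(x)\leq 3\eta_2 n$; (P7) for all $x\in B$: $d^-_S(x),d^+_T(x)>n/2-3\eta_2 n$ and $d^-_T(x),d^+_S(x)\leq 3\eta_2 n$. (Q1) $\lfloor n/2\rfloor-\varepsilon_3 n\leq a,b\leq\lceil n/2\rceil+\varepsilon_3 n$; (Q2) $\delta^0(G[A,B])\geq n/50$; (Q3) $d^\pm_B(x)\geq n/2-\varepsilon_3 n$ for all but at most $\varepsilon_3 n$ vertices $x\in A$; (Q4) $d^\pm_A(x)\geq n/2-\varepsilon_3 n$ for all but at most $\varepsilon_3 n$ vertices $x\in B$; (Q5) $s+t\leq\varepsilon_3 n$; (Q6) $d^-_A(x),d^+_B(x)\geq n/50$ for all $x\in S$; (Q7) $d^-_B(x),d^+_A(x)\geq n/50$ for all $x\in T$; (Q8) if $a<b$, then $d^\pm_B(x)<n/20$ for all $x\in B$ (i.e. both $d^+_B(x),d^-_B(x)<n/20$), $d^-_B(x)<n/20$ for all $x\in S$ and $d^+_B(x)<n/20$ for all $x\in T$. (R1) $a,b,s,t\geq\tau n$; (R2) $|a-b|,|s-t|\leq\varepsilon_1 n$; (R3) $\delta^0(G[A,B])\geq\eta_1 n$; (R4)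 $d^+_{B\cup S}(x),d^-_{A\cup S}(x)\geq\eta_1 n$ for all $x\in S$; (R5) $d^+_{A\cup T}(x),d^-_{B\cup T}(x)\geq\eta_1 n$ for all $x\in T$; (R6) $d^\pm_B(x)\geq b-\varepsilon^{1/3}n$ for all but at most $\varepsilon_1 n$ vertices $x\in A$; (R7) $d^\pm_A(x)\geq a-\varepsilon^{1/3}n$ for all but at most $\varepsilon_1 n$ vertices $x\in B$; (R8) $d^+_{B\cup S}(x)\geq b+s-\varepsilon^{1/3}n$ and $d^-_{A\cup S}(x)\geq a+s-\varepsilon^{1/3}n$ for all but at most $\varepsilon_1 n$ vertices $x\in S$; (R9) $d^+_{A\cup T}(x)\geq a+t-\varepsilon^{1/3}n$ and $d^-_{B\cup T}(x)\geq b+t-\varepsilon^{1/3}n$ for all but at most $\varepsilon_1 n$ vertices $x\in T$. The hierarchy $\alpha\ll\beta$ means the statement holds whenever $\alpha$ is sufficiently small as a function of $\beta$; constants are chosen from right to left. *)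

theory Defs
  imports Complex_Main
begin

text \<open>A digraph is given by a finite vertex set V (of naturals) and an edge set
E \<subseteq> V \<times> V without loops; using a set of ordered pairs gives at most one
edge in each direction between two vertices.\<close>

definition digraph :: "nat set \<Rightarrow> (nat \<times> nat) set \<Rightarrow> bool" where
  "digraph V E \<longleftrightarrow> finite V \<and> E \<subseteq> V \<times> V \<and> (\<forall>x. (x, x) \<notin> E)"

definition outdeg :: "(nat \<times> nat) set \<Rightarrow> nat set \<Rightarrow> nat \<Rightarrow> nat" where
  "outdeg E X x = card {y \<in> X. (x, y) \<in> E}"

definition indeg :: "(nat \<times> nat) set \<Rightarrow> nat set \<Rightarrow> nat \<Rightarrow> nat" where
  "indeg E X x = card {y \<in> X. (y, x) \<in> E}"

definition ecount :: "(nat \<times> nat) set \<Rightarrow> nat set \<Rightarrow> nat set \<Rightarrow> nat" where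
  "ecount E X Y = card (E \<inter> (X \<times> Y))"

definition semideg_ge :: "(nat \<times> nat) set \<Rightarrow> nat set \<Rightarrow> real \<Rightarrow> bool" where
  "semideg_ge E X c \<longleftrightarrow> (\<forall>x\<in>X. real (outdeg E X x) \<ge> c \<and> real (indeg E X x) \<ge> c)"

text \<open>delta^0(G[A,B]) \<ge> c, where G[A,B] has vertex set A \<union> B and edges E(A,B) \<union> E(B,A)
 (A, B disjoint).\<close>
definition bip_semideg_ge :: "(nat \<times> nat) set \<Rightarrow> nat set \<Rightarrow> nat set \<Rightarrow> real \<Rightarrow> bool" where
  "bip_semideg_ge E A B c \<longleftrightarrow>
     (\<forall>x\<in>A. real (outdeg E B x) \<ge> c \<and> real (indeg E B x) \<ge> c) \<and>
     (\<forall>x\<in>B. real (outdeg E A x) \<ge> c \<and> real (indeg E A x) \<ge> c)"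

definition partition4 :: "nat set \<Rightarrow> nat set \<Rightarrow> nat set \<Rightarrow> nat set \<Rightarrow> nat set \<Rightarrow> bool" where
  "partition4 V A B S T \<longleftrightarrow> A \<union> B \<union> S \<union> T = V \<and>
     A \<inter> B = {} \<and> A \<inter> S = {} \<and> A \<inter> T = {} \<and> B \<inter> S = {} \<and> B \<inter> T = {} \<and> S \<inter> T = {}"

definition extremal :: "real \<Rightarrow> nat set \<Rightarrow> (nat \<times> nat) set \<Rightarrow> bool" where
  "extremal \<epsilon> V E \<longleftrightarrow> (\<exists>A B S T. partition4 V A B S T \<and>
     \<bar>real (card A) - real (card B)\<bar> \<le> 1 \<and> \<bar>real (card S) - real (card T)\<bar> \<le> 1 \<and>
     real (ecount E (A \<union> S) (A \<union> T)) < \<epsilon> * (real (card V))\<^sup>2)"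

definition condP :: "real \<Rightarrow> real \<Rightarrow> nat set \<Rightarrow> (nat \<times> nat) set \<Rightarrow>
    nat set \<Rightarrow> nat set \<Rightarrow> nat set \<Rightarrow> nat set \<Rightarrow> bool" where
  "condP \<epsilon>\<^sub>3 \<eta>\<^sub>2 V E A B S T \<longleftrightarrow>
    (let n = real (card V); a = real (card A); b = real (card B);
         s = real (card S); t = real (card T) in
     \<comment> \<open>P1\<close>
     real_of_int \<lfloor>n/2\<rfloor> - \<epsilon>\<^sub>3*n \<le> s \<and> s \<le> real_of_int \<lceil>n/2\<rceil> + \<epsilon>\<^sub>3*n \<and>
     real_of_int \<lfloor>n/2\<rfloor> - \<epsilon>\<^sub>3*n \<le> t \<and> t \<le> real_of_int \<lceil>n/2\<rceil> + \<epsilon>\<^sub>3*n \<and>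
     \<comment> \<open>P2\<close>
     semideg_ge E S (\<eta>\<^sub>2*n) \<and> semideg_ge E T (\<eta>\<^sub>2*n) \<and>
     \<comment> \<open>P3\<close>
     real (card {x\<in>S. \<not> (real (outdeg E S x) \<ge> n/2 - \<epsilon>\<^sub>3*n \<and> real (indeg E S x) \<ge> n/2 - \<epsilon>\<^sub>3*n)})
        \<le> \<epsilon>\<^sub>3*n \<and>
     \<comment> \<open>P4\<close>
     real (card {x\<in>T. \<not> (real (outdeg E T x) \<ge> n/2 - \<epsilon>\<^sub>3*n \<and> real (indeg E T x) \<ge> n/2 - \<epsilon>\<^sub>3*n)})
        \<le> \<epsilon>\<^sub>3*n \<and>
     \<comment> \<open>P5\<close>
     a + b \<le> \<epsilon>\<^sub>3*n \<and>
     \<comment> \<open>P6\<close>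
     (\<forall>x\<in>A. real (indeg E T x) > n/2 - 3*\<eta>\<^sub>2*n \<and> real (outdeg E S x) > n/2 - 3*\<eta>\<^sub>2*n \<and>
            real (indeg E S x) \<le> 3*\<eta>\<^sub>2*n \<and> real (outdeg E T x) \<le> 3*\<eta>\<^sub>2*n) \<and>
     \<comment> \<open>P7\<close>
     (\<forall>x\<in>B. real (indeg E S x) > n/2 - 3*\<eta>\<^sub>2*n \<and> real (outdeg E T x) > n/2 - 3*\<eta>\<^sub>2*n \<and>
            real (indeg E T x) \<le> 3*\<eta>\<^sub>2*n \<and> real (outdeg E S x) \<le> 3*\<eta>\<^sub>2*n))"

definition condQ :: "real \<Rightarrow> nat set \<Rightarrow> (nat \<times> nat) set \<Rightarrow>
    nat set \<Rightarrow> nat set \<Rightarrow> nat set \<Rightarrow> nat set \<Rightarrow> bool" where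
  "condQ \<epsilon>\<^sub>3 V E A B S T \<longleftrightarrow>
    (let n = real (card V); a = real (card A); b = real (card B);
         s = real (card S); t = real (card T) in
     \<comment> \<open>Q1\<close>
     real_of_int \<lfloor>n/2\<rfloor> - \<epsilon>\<^sub>3*n \<le> a \<and> a \<le> real_of_int \<lceil>n/2\<rceil> + \<epsilon>\<^sub>3*n \<and>
     real_of_int \<lfloor>n/2\<rfloor> - \<epsilon>\<^sub>3*n \<le> b \<and> b \<le> real_of_int \<lceil>n/2\<rceil> + \<epsilon>\<^sub>3*n \<and>
     \<comment> \<open>Q2\<close>
     bip_semideg_ge E A B (n/50) \<and>
     \<comment> \<open>Q3\<close>
     real (card {x\<in>A. \<not> (real (outdeg E B x) \<ge> n/2 - \<epsilon>\<^sub>3*n \<and> real (indeg E B x) \<ge> n/2 - \<epsilon>\<^sub>3*n)})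
        \<le> \<epsilon>\<^sub>3*n \<and>
     \<comment> \<open>Q4\<close>
     real (card {x\<in>B. \<not> (real (outdeg E A x) \<ge> n/2 - \<epsilon>\<^sub>3*n \<and> real (indeg E A x) \<ge> n/2 - \<epsilon>\<^sub>3*n)})
        \<le> \<epsilon>\<^sub>3*n \<and>
     \<comment> \<open>Q5\<close>
     s + t \<le> \<epsilon>\<^sub>3*n \<and>
     \<comment> \<open>Q6\<close>
     (\<forall>x\<in>S. real (indeg E A x) \<ge> n/50 \<and> real (outdeg E B x) \<ge> n/50) \<and>
     \<comment> \<open>Q7\<close>
     (\<forall>x\<in>T. real (indeg E B x) \<ge> n/50 \<and> real (outdeg E A x) \<ge> n/50) \<and>
     \<comment> \<open>Q8\<close>
     (a < b \<longrightarrow>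
        (\<forall>x\<in>B. real (outdeg E B x) < n/20 \<and> real (indeg E B x) < n/20) \<and>
        (\<forall>x\<in>S. real (indeg E B x) < n/20) \<and>
        (\<forall>x\<in>T. real (outdeg E B x) < n/20)))"

definition condR :: "real \<Rightarrow> real \<Rightarrow> real \<Rightarrow> real \<Rightarrow> nat set \<Rightarrow> (nat \<times> nat) set \<Rightarrow>
    nat set \<Rightarrow> nat set \<Rightarrow> nat set \<Rightarrow> nat set \<Rightarrow> bool" where
  "condR \<epsilon> \<epsilon>\<^sub>1 \<eta>\<^sub>1 \<tau> V E A B S T \<longleftrightarrow>
    (let n = real (card V); a = real (card A); b = real (card B);
         s = real (card S); t = real (card T); r = \<epsilon> powr (1/3) * n in
     \<comment> \<open>R1\<close>
     a \<ge> \<tau>*n \<and> b \<ge> \<tau>*n \<and> s \<ge> \<tau>*n \<and> t \<ge> \<tau>*n \<and>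
     \<comment> \<open>R2\<close>
     \<bar>a - b\<bar> \<le> \<epsilon>\<^sub>1*n \<and> \<bar>s - t\<bar> \<le> \<epsilon>\<^sub>1*n \<and>
     \<comment> \<open>R3\<close>
     bip_semideg_ge E A B (\<eta>\<^sub>1*n) \<and>
     \<comment> \<open>R4\<close>
     (\<forall>x\<in>S. real (outdeg E (B \<union> S) x) \<ge> \<eta>\<^sub>1*n \<and> real (indeg E (A \<union> S) x) \<ge> \<eta>\<^sub>1*n) \<and>
     \<comment> \<open>R5\<close>
     (\<forall>x\<in>T. real (outdeg E (A \<union> T) x) \<ge> \<eta>\<^sub>1*n \<and> real (indeg E (B \<union> T) x) \<ge> \<eta>\<^sub>1*n) \<and>
     \<comment> \<open>R6\<close>
     real (card {x\<in>A. \<not> (real (outdeg E B x) \<ge> b - r \<and> real (indeg E B x) \<ge> b - r)}) \<le> \<epsilon>\<^sub>1*n \<and>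
     \<comment> \<open>R7\<close>
     real (card {x\<in>B. \<not> (real (outdeg E A x) \<ge> a - r \<and> real (indeg E A x) \<ge> a - r)}) \<le> \<epsilon>\<^sub>1*n \<and>
     \<comment> \<open>R8\<close>
     real (card {x\<in>S. \<not> (real (outdeg E (B \<union> S) x) \<ge> b + s - r \<and>
                           real (indeg E (A \<union> S) x) \<ge> a + s - r)}) \<le> \<epsilon>\<^sub>1*n \<and>
     \<comment> \<open>R9\<close>
     real (card {x\<in>T. \<not> (real (outdeg E (A \<union> T) x) \<ge> a + t - r \<and>
                           real (indeg E (B \<union> T) x) \<ge> b + t - r)}) \<le> \<epsilon>\<^sub>1*n)"

end

theory Submission
  imports Defs
begin

text \<open>Let d = \<surd>\<epsilon> and fix an extremal partition A0, B0, S0, T0, so that fewer than d^2 n^2 edges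
  go from A0 \<union> S0 to A0 \<union> T0. Double counting against \<delta>^0(G) \<ge> n/2 shows that all but 4dn
  vertices are typical: they have almost no out-neighbours in A0 \<union> T0 if they lie in A0 \<union> S0 and
  almost all of A0 \<union> T0 as out-neighbours otherwise, and dually for in-neighbours from A0 \<union> S0.
  The partition is then repaired according to which classes are large. If A0 is small, S and T
  are rebuilt from the vertices with substantial degree inside S0 and T0 (conditions P). If S0
  is small, typical vertices keep their class and the others are sorted by their degrees into A0
  and B0; for (Q8) vertices are then moved, one at a time, out of B or into A while |A| < |B|
  and some vertex has many neighbours in B (conditions Q). Otherwise typical vertices keep their
  class and each atypical vertex joins a class to which it is substantially connected
  (conditions R). In each case few vertices change class, so every degree condition survives up
  to a small error.\<close>

section \<open>Partitions as class assignments\<close>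

text \<open>A partition of V into A, B, S, T is represented by the function assigning to each vertex
  its class; moved V f g is the set of vertices that f and g put into different classes.\<close>

datatype part = PA | PB | PS | PT

definition block :: "nat set \<Rightarrow> (nat \<Rightarrow> part) \<Rightarrow> part \<Rightarrow> nat set" where
  "block V f p = {x \<in> V. f x = p}"

definition moved :: "nat set \<Rightarrow> (nat \<Rightarrow> part) \<Rightarrow> (nat \<Rightarrow> part) \<Rightarrow> nat set" where
  "moved V f g = {x \<in> V. f x \<noteq> g x}"

lemma partition4_blocks:
  "partition4 V (block V f PA) (block V f PB) (block V f PS) (block V f PT)"
  unfolding partition4_def block_def by (auto intro: part.exhaust)

lemma partition4_obtain_blocks:
  assumes "partition4 V A B S T"
  obtains f where "block V f PA = A" "block V f PB = B" "block V f PS = S" "block V f PT = T"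
proof
  let ?f = "\<lambda>x. if x \<in> A then PA else if x \<in> B then PB else if x \<in> S then PS else PT"
  show "block V ?f PA = A" "block V ?f PB = B" "block V ?f PS = S" "block V ?f PT = T"
    using assms unfolding partition4_def block_def by auto
qed

lemma finite_block: "finite V \<Longrightarrow> finite (block V f p)"
  unfolding block_def by simp

lemma block_disjoint: "p \<noteq> q \<Longrightarrow> block V f p \<inter> block V f q = {}"
  unfolding block_def by auto

lemma Un_blocks: "block V f PA \<union> block V f PB \<union> block V f PS \<union> block V f PT = V"
  unfolding block_def by (auto intro: part.exhaust)

lemma card_blocks:
  assumes "finite V"
  shows "card V = card (block V f PA) + card (block V f PB) + card (block V f PS) + card (block V f PT)"
  using assms
  by (subst (1) Un_blocks[symmetric])
     (simp add: card_Un_disjoint finite_block Int_Un_distrib2 block_disjoint)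

lemma outdeg_converse [simp]: "outdeg (E\<inverse>) X x = indeg E X x"
  unfolding outdeg_def indeg_def by simp

lemma indeg_converse [simp]: "indeg (E\<inverse>) X x = outdeg E X x"
  unfolding outdeg_def indeg_def by simp

lemma ecount_converse [simp]: "ecount (E\<inverse>) X Y = ecount E Y X"
proof -
  have "E\<inverse> \<inter> X \<times> Y = prod.swap ` (E \<inter> Y \<times> X)" by auto
  then show ?thesis unfolding ecount_def by (simp add: card_image)
qed

lemma semideg_ge_converse [simp]: "semideg_ge (E\<inverse>) X c \<longleftrightarrow> semideg_ge E X c"
  unfolding semideg_ge_def by auto

lemma outdeg_le_card: "finite X \<Longrightarrow> outdeg E X x \<le> card X"
  unfolding outdeg_def by (rule card_mono) auto

lemma indeg_le_card: "finite X \<Longrightarrow> indeg E X x \<le> card X"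
  using outdeg_le_card[of X "E\<inverse>"] by simp

lemma outdeg_Un:
  assumes "finite X" "finite Y" "X \<inter> Y = {}"
  shows "outdeg E (X \<union> Y) x = outdeg E X x + outdeg E Y x"
proof -
  have "{y \<in> X \<union> Y. (x, y) \<in> E} = {y \<in> X. (x, y) \<in> E} \<union> {y \<in> Y. (x, y) \<in> E}" by auto
  then show ?thesis
    unfolding outdeg_def using assms by (simp add: card_Un_disjoint disjoint_iff)
qed

lemma indeg_Un:
  "finite X \<Longrightarrow> finite Y \<Longrightarrow> X \<inter> Y = {} \<Longrightarrow> indeg E (X \<union> Y) x = indeg E X x + indeg E Y x"
  using outdeg_Un[of X Y "E\<inverse>"] by simp

lemma outdeg_blocks:
  assumes "finite V"
  shows "outdeg E V x = outdeg E (block V f PA) x + outdeg E (block V f PB) x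
                        + outdeg E (block V f PS) x + outdeg E (block V f PT) x"
  using assms
  by (subst (1) Un_blocks[symmetric])
     (simp add: outdeg_Un finite_block Int_Un_distrib2 block_disjoint)

lemma indeg_blocks:
  "finite V \<Longrightarrow> indeg E V x = indeg E (block V f PA) x + indeg E (block V f PB) x
                               + indeg E (block V f PS) x + indeg E (block V f PT) x"
  using outdeg_blocks[of V "E\<inverse>"] by simp

lemma outdeg_block_Un:
  "finite V \<Longrightarrow> p \<noteq> q \<Longrightarrow>
     outdeg E (block V f p \<union> block V f q) x = outdeg E (block V f p) x + outdeg E (block V f q) x"
  by (simp add: outdeg_Un finite_block block_disjoint)

lemma indeg_block_Un:
  "finite V \<Longrightarrow> p \<noteq> q \<Longrightarrow>
     indeg E (block V f p \<union> block V f q) x = indeg E (block V f p) x + indeg E (block V f q) x"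
  by (simp add: indeg_Un finite_block block_disjoint)

lemma card_block_Un:
  "finite V \<Longrightarrow> p \<noteq> q \<Longrightarrow>
     card (block V f p \<union> block V f q) = card (block V f p) + card (block V f q)"
  by (simp add: card_Un_disjoint finite_block block_disjoint)

lemma block_diff_subset_moved: "block V f p - block V g p \<subseteq> moved V f g"
  unfolding block_def moved_def by auto

lemma outdeg_le_outdeg_diff:
  assumes "finite X" "finite Y"
  shows "outdeg E X x \<le> outdeg E Y x + card (X - Y)"
proof -
  have "outdeg E X x \<le> card ({y \<in> Y. (x, y) \<in> E} \<union> (X - Y))"
    unfolding outdeg_def by (rule card_mono) (use assms in auto)
  then show ?thesis
    unfolding outdeg_def using card_Un_le le_trans by blast
qed

lemma outdeg_block_shift:
  assumes "finite V" and m: "real (card (moved V f g)) \<le> m"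
  shows "real (outdeg E (block V g p) x) - m \<le> real (outdeg E (block V f p) x)"
    and "real (outdeg E (block V f p) x) \<le> real (outdeg E (block V g p) x) + m"
proof -
  have "card (block V g p - block V f p) \<le> card (moved V f g)"
       "card (block V f p - block V g p) \<le> card (moved V f g)"
    using block_diff_subset_moved[of V g p f] block_diff_subset_moved[of V f p g] assms(1)
    by (auto intro!: card_mono simp: moved_def)
  then show "real (outdeg E (block V g p) x) - m \<le> real (outdeg E (block V f p) x)"
    and "real (outdeg E (block V f p) x) \<le> real (outdeg E (block V g p) x) + m"
    using outdeg_le_outdeg_diff[of "block V g p" "block V f p" E x]
      outdeg_le_outdeg_diff[of "block V f p" "block V g p" E x] m assms(1)
    by (simp_all add: finite_block)
qed

lemma indeg_block_shift:
  assumes "finite V" and "real (card (moved V f g)) \<le> m"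
  shows "real (indeg E (block V g p) x) - m \<le> real (indeg E (block V f p) x)"
    and "real (indeg E (block V f p) x) \<le> real (indeg E (block V g p) x) + m"
  using outdeg_block_shift[OF assms, of "E\<inverse>"] by simp_all

lemma card_block_shift:
  assumes "finite V" and m: "real (card (moved V f g)) \<le> m"
  shows "real (card (block V g p)) - m \<le> real (card (block V f p))"
    and "real (card (block V f p)) \<le> real (card (block V g p)) + m"
proof -
  have "card X \<le> card Y + card (moved V f g)"
    if "X = block V f p \<and> Y = block V g p \<or> X = block V g p \<and> Y = block V f p" for X Y
  proof -
    have "card X \<le> card (Y \<union> moved V f g)"
      using that assms(1) by (intro card_mono) (auto simp: block_def moved_def)
    then show ?thesis using card_Un_le le_trans by blast
  qed
  then show "real (card (block V g p)) - m \<le> real (card (block V f p))"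
    and "real (card (block V f p)) \<le> real (card (block V g p)) + m"
    using m by (smt (verit) of_nat_add of_nat_mono)+
qed

lemma sum_outdeg_eq_ecount:
  assumes "finite X" "finite Y"
  shows "(\<Sum>x\<in>X. outdeg E Y x) = ecount E X Y"
proof -
  have "E \<inter> X \<times> Y = (SIGMA x:X. {y \<in> Y. (x, y) \<in> E})" by auto
  then show ?thesis
    unfolding ecount_def outdeg_def using assms by (simp add: card_SigmaI)
qed

lemma sum_indeg_eq_ecount:
  "finite X \<Longrightarrow> finite Y \<Longrightarrow> (\<Sum>y\<in>Y. indeg E X y) = ecount E X Y"
  using sum_outdeg_eq_ecount[of Y X "E\<inverse>"] by simp

lemma card_ge_mult_le_sum:
  fixes f :: "'a \<Rightarrow> real"
  assumes "finite X" "\<And>x. x \<in> X \<Longrightarrow> 0 \<le> f x"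
  shows "real (card {x \<in> X. k \<le> f x}) * k \<le> (\<Sum>x\<in>X. f x)"
proof -
  have "real (card {x \<in> X. k \<le> f x}) * k = (\<Sum>x\<in>{x \<in> X. k \<le> f x}. k)" by simp
  also have "\<dots> \<le> (\<Sum>x\<in>{x \<in> X. k \<le> f x}. f x)" by (rule sum_mono) simp
  also have "\<dots> \<le> (\<Sum>x\<in>X. f x)" by (rule sum_mono2) (use assms in auto)
  finally show ?thesis .
qed

lemma card_outdeg_ge_le:
  assumes "finite X" "finite Y"
  shows "real (card {x \<in> X. k \<le> real (outdeg E Y x)}) * k \<le> real (ecount E X Y)"
  using card_ge_mult_le_sum[OF assms(1), of "\<lambda>x. real (outdeg E Y x)" k]
    sum_outdeg_eq_ecount[OF assms, of E] by (simp flip: of_nat_sum)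

section \<open>Typical vertices of a sparse pair\<close>

text \<open>The vertices outside X that miss many edges into Y are few: the indegrees of the vertices
  of Y are large, and only few of their in-edges come from X.\<close>

lemma card_outdeg_deficit_le:
  assumes fV: "finite V" and XV: "X \<subseteq> V" and YV: "Y \<subseteq> V"
    and deg: "\<And>y. y \<in> Y \<Longrightarrow> c \<le> real (indeg E V y)"
  shows "real (card {x \<in> V - X. k \<le> real (card Y) - real (outdeg E Y x)}) * k
           \<le> real (card Y) * (real (card (V - X)) - c) + real (ecount E X Y)"
proof -
  have fin: "finite X" "finite Y" "finite (V - X)"
    using fV XV YV finite_subset by auto
  have split: "indeg E V y = indeg E X y + indeg E (V - X) y" for y
    using indeg_Un[of X "V - X" E y] fin XV by (simp add: Un_absorb1)
  have "real (card Y) * c - real (ecount E X Y) \<le> (\<Sum>y\<in>Y. real (indeg E (V - X) y))"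
  proof -
    have "real (card Y) * c = (\<Sum>y\<in>Y. c)" by simp
    also have "\<dots> \<le> (\<Sum>y\<in>Y. real (indeg E X y) + real (indeg E (V - X) y))"
      by (rule sum_mono) (use deg split in simp)
    finally show ?thesis
      using sum_indeg_eq_ecount[OF fin(1,2), of E] by (simp add: sum.distrib flip: of_nat_sum)
  qed
  also have "(\<Sum>y\<in>Y. real (indeg E (V - X) y)) = (\<Sum>x\<in>V - X. real (outdeg E Y x))"
    using sum_indeg_eq_ecount[OF fin(3,2)] sum_outdeg_eq_ecount[OF fin(3,2)]
    by (simp flip: of_nat_sum)
  finally have "(\<Sum>x\<in>V - X. real (card Y) - real (outdeg E Y x))
                  \<le> real (card Y) * (real (card (V - X)) - c) + real (ecount E X Y)"
    by (simp add: sum_subtractf algebra_simps)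
  moreover have "real (card {x \<in> V - X. k \<le> real (card Y) - real (outdeg E Y x)}) * k
                   \<le> (\<Sum>x\<in>V - X. real (card Y) - real (outdeg E Y x))"
    by (rule card_ge_mult_le_sum) (use fin outdeg_le_card in auto)
  ultimately show ?thesis by linarith
qed

text \<open>X and Y will be A0 \<union> S0 and A0 \<union> T0. The conditions on in-neighbours are
  those on out-neighbours for the reversed edges, with X and Y exchanged.\<close>

definition out_typical :: "(nat \<times> nat) set \<Rightarrow> real \<Rightarrow> real \<Rightarrow> nat set \<Rightarrow> nat set \<Rightarrow> nat \<Rightarrow> bool" where
  "out_typical E \<delta> N X Y x \<longleftrightarrow>
     (x \<in> X \<longrightarrow> real (outdeg E Y x) < \<delta> * N) \<and>
     (x \<notin> X \<longrightarrow> real (card Y) - 2 * \<delta> * N < real (outdeg E Y x))"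

definition typical :: "(nat \<times> nat) set \<Rightarrow> real \<Rightarrow> real \<Rightarrow> nat set \<Rightarrow> nat set \<Rightarrow> nat \<Rightarrow> bool" where
  "typical E \<delta> N X Y x \<longleftrightarrow> out_typical E \<delta> N X Y x \<and> out_typical (E\<inverse>) \<delta> N Y X x"

lemma card_not_out_typical_le:
  fixes V :: "nat set" and \<delta> :: real
  defines "N \<equiv> real (card V)"
  assumes fV: "finite V" and XV: "X \<subseteq> V" and YV: "Y \<subseteq> V"
    and deg: "semideg_ge E V (N / 2)" and co: "real (card (V - X)) \<le> N / 2 + 1"
    and sparse: "real (ecount E X Y) < \<delta>\<^sup>2 * N\<^sup>2" and \<delta>: "0 < \<delta>" "1 \<le> \<delta>\<^sup>2 * N"
  shows "real (card {x \<in> V. \<not> out_typical E \<delta> N X Y x}) \<le> 2 * \<delta> * N"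
proof -
  define H1 where "H1 = {x \<in> X. \<delta> * N \<le> real (outdeg E Y x)}"
  define H2 where "H2 = {x \<in> V - X. 2 * \<delta> * N \<le> real (card Y) - real (outdeg E Y x)}"
  have fin: "finite X" "finite Y" "finite H1" "finite H2"
    using fV XV YV finite_subset unfolding H1_def H2_def by fastforce+
  have N: "0 < N" "real (card Y) \<le> N"
    using \<delta>(2) fV YV card_mono unfolding N_def by (fastforce intro: Nat.gr0I)+
  have "real (card H1) * (\<delta> * N) < \<delta> * N * (\<delta> * N)"
    using card_outdeg_ge_le[OF fin(1,2), of "\<delta> * N" E] sparse unfolding H1_def
    by (simp add: power2_eq_square algebra_simps)
  then have H1: "real (card H1) \<le> \<delta> * N"
    using \<delta> N by simp
  have "real (card H2) * (2 * \<delta> * N) \<le> real (card Y) * 1 + \<delta>\<^sup>2 * N\<^sup>2"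
  proof -
    have "real (card Y) * (real (card (V - X)) - N / 2) \<le> real (card Y) * 1"
      using co by (intro mult_left_mono) auto
    moreover have indeg: "\<And>y. y \<in> Y \<Longrightarrow> N / 2 \<le> real (indeg E V y)"
      using deg YV unfolding semideg_ge_def by auto
    ultimately show ?thesis
      using card_outdeg_deficit_le[OF fV XV YV indeg, of "2 * \<delta> * N"] sparse
      unfolding H2_def by linarith
  qed
  also have "\<dots> \<le> 2 * \<delta> * N * (\<delta> * N)"
  proof -
    have "N * 1 \<le> N * (\<delta>\<^sup>2 * N)"
      using mult_left_mono[OF \<delta>(2), of N] N by linarith
    moreover have "2 * \<delta> * N * (\<delta> * N) = 2 * (\<delta>\<^sup>2 * N\<^sup>2)" "N * (\<delta>\<^sup>2 * N) = \<delta>\<^sup>2 * N\<^sup>2"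
      by (simp_all add: power2_eq_square)
    ultimately show ?thesis
      using N by linarith
  qed
  finally have H2: "real (card H2) \<le> \<delta> * N"
    using \<delta> N by simp
  have "{x \<in> V. \<not> out_typical E \<delta> N X Y x} \<subseteq> H1 \<union> H2"
    unfolding out_typical_def H1_def H2_def by auto
  then have "card {x \<in> V. \<not> out_typical E \<delta> N X Y x} \<le> card H1 + card H2"
    using fin card_Un_le card_mono le_trans by (metis (no_types, lifting) finite_UnI)
  then show ?thesis using H1 H2 by linarith
qed

lemma card_not_typical_le:
  fixes V :: "nat set" and \<delta> :: real
  defines "N \<equiv> real (card V)"
  assumes fV: "finite V" and XV: "X \<subseteq> V" and YV: "Y \<subseteq> V"
    and deg: "semideg_ge E V (N / 2)"
    and co: "real (card (V - X)) \<le> N / 2 + 1" "real (card (V - Y)) \<le> N / 2 + 1"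
    and sparse: "real (ecount E X Y) < \<delta>\<^sup>2 * N\<^sup>2" and \<delta>: "0 < \<delta>" "1 \<le> \<delta>\<^sup>2 * N"
  shows "real (card {x \<in> V. \<not> typical E \<delta> N X Y x}) \<le> 4 * \<delta> * N"
proof -
  have "{x \<in> V. \<not> typical E \<delta> N X Y x}
          = {x \<in> V. \<not> out_typical E \<delta> N X Y x} \<union> {x \<in> V. \<not> out_typical (E\<inverse>) \<delta> N Y X x}"
    unfolding typical_def by auto
  then have "card {x \<in> V. \<not> typical E \<delta> N X Y x}
               \<le> card {x \<in> V. \<not> out_typical E \<delta> N X Y x} + card {x \<in> V. \<not> out_typical (E\<inverse>) \<delta> N Y X x}"
    by (simp add: card_Un_le)
  moreover have "real (card {x \<in> V. \<not> out_typical E \<delta> N X Y x}) \<le> 2 * \<delta> * N"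
    using card_not_out_typical_le[OF fV XV YV] deg co sparse \<delta> unfolding N_def by blast
  moreover have "real (card {x \<in> V. \<not> out_typical (E\<inverse>) \<delta> N Y X x}) \<le> 2 * \<delta> * N"
    using card_not_out_typical_le[OF fV YV XV, of "E\<inverse>"] deg co sparse \<delta> unfolding N_def by simp
  ultimately show ?thesis by linarith
qed

section \<open>Balancing the classes A and B\<close>

lemma block_fun_upd:
  "x \<in> V \<Longrightarrow> block V (f(x := q)) p = (if p = q then insert x (block V f p) else block V f p - {x})"
  unfolding block_def by auto

definition swap_part :: "part \<Rightarrow> part" where
  "swap_part p = (case p of PA \<Rightarrow> PB | PB \<Rightarrow> PA | PS \<Rightarrow> PT | PT \<Rightarrow> PS)"

lemma swap_part_simps [simp]:
  "swap_part PA = PB" "swap_part PB = PA" "swap_part PS = PT" "swap_part PT = PS"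
  by (simp_all add: swap_part_def)

lemma swap_part_eq_iff: "swap_part p = q \<longleftrightarrow> p = swap_part q"
  by (cases p; cases q) simp_all

lemma block_swap_part:
  "block V (swap_part \<circ> f) PA = block V f PB" "block V (swap_part \<circ> f) PB = block V f PA"
  "block V (swap_part \<circ> f) PS = block V f PT" "block V (swap_part \<circ> f) PT = block V f PS"
  unfolding block_def by (simp_all add: swap_part_eq_iff)

text \<open>The degrees demanded by (Q2), (Q6) and (Q7) of a vertex in class p, measured against
  fixed classes A and B.\<close>

definition linked :: "(nat \<times> nat) set \<Rightarrow> nat set \<Rightarrow> nat set \<Rightarrow> real \<Rightarrow> part \<Rightarrow> nat \<Rightarrow> bool" where
  "linked E A B c p x \<longleftrightarrow>
     (case p of
        PA \<Rightarrow> c \<le> real (outdeg E B x) \<and> c \<le> real (indeg E B x)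
      | PB \<Rightarrow> c \<le> real (outdeg E A x) \<and> c \<le> real (indeg E A x)
      | PS \<Rightarrow> c \<le> real (indeg E A x) \<and> c \<le> real (outdeg E B x)
      | PT \<Rightarrow> c \<le> real (indeg E B x) \<and> c \<le> real (outdeg E A x))"

lemma linked_swap_part: "linked E B A c (swap_part p) x = linked E A B c p x"
  unfolding linked_def by (cases p) auto

lemma linked_block_shift:
  assumes "finite V" "real (card (moved V f g)) \<le> m" "c' + m \<le> c"
    and "linked E (block V g PA) (block V g PB) c p x"
  shows "linked E (block V f PA) (block V f PB) c' p x"
  using assms(4) outdeg_block_shift[OF assms(1,2), of E _ x] indeg_block_shift[OF assms(1,2), of E _ x] assms(3)
  unfolding linked_def by (cases p) (simp_all, (smt (verit))+)

definition sparse_B :: "(nat \<times> nat) set \<Rightarrow> real \<Rightarrow> nat set \<Rightarrow> nat set \<Rightarrow> nat set \<Rightarrow> bool" where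
  "sparse_B E N B S T \<longleftrightarrow>
     (\<forall>x\<in>B. real (outdeg E B x) < N / 20 \<and> real (indeg E B x) < N / 20) \<and>
     (\<forall>x\<in>S. real (indeg E B x) < N / 20) \<and> (\<forall>x\<in>T. real (outdeg E B x) < N / 20)"

definition excess :: "nat set \<Rightarrow> (nat \<Rightarrow> part) \<Rightarrow> nat" where
  "excess V f = card (block V f PB) - card (block V f PA)"

text \<open>A state of the procedure that balances A and B for (Q8): every vertex is linked to the
  initial classes A1, B1, and each vertex moved so far has reduced the excess of B over A.\<close>

definition balancing_state :: "nat set \<Rightarrow> (nat \<times> nat) set \<Rightarrow> (nat \<Rightarrow> part) \<Rightarrow> (nat \<Rightarrow> part) \<Rightarrow> bool" where
  "balancing_state V E f1 f \<longleftrightarrow>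
     (\<forall>x\<in>V. linked E (block V f1 PA) (block V f1 PB) (real (card V) / 30) (f x) x) \<and>
     card (block V f PA) \<le> card (block V f PB) \<and>
     card (moved V f f1) + excess V f \<le> excess V f1"

lemma card_block_fun_upd:
  assumes "finite V" "x \<in> V" "f x \<noteq> q"
  shows "card (block V (f(x := q)) q) = card (block V f q) + 1"
    and "card (block V (f(x := q)) (f x)) = card (block V f (f x)) - 1"
    and "p \<noteq> q \<Longrightarrow> p \<noteq> f x \<Longrightarrow> card (block V (f(x := q)) p) = card (block V f p)"
proof -
  have "x \<notin> block V f q" "x \<in> block V f (f x)" "p \<noteq> f x \<Longrightarrow> x \<notin> block V f p"
    using assms by (auto simp: block_def)
  then show "card (block V (f(x := q)) q) = card (block V f q) + 1"
    and "card (block V (f(x := q)) (f x)) = card (block V f (f x)) - 1"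
    and "p \<noteq> q \<Longrightarrow> p \<noteq> f x \<Longrightarrow> card (block V (f(x := q)) p) = card (block V f p)"
    using assms by (simp_all add: block_fun_upd finite_block)
qed

lemma balancing_move:
  assumes fV: "finite V" and st: "balancing_state V E f1 f" and x: "x \<in> V"
    and linked: "linked E (block V f1 PA) (block V f1 PB) (real (card V) / 30) q x"
    and AB: "card (block V (f(x := q)) PA) \<le> card (block V (f(x := q)) PB)"
    and dec: "excess V (f(x := q)) < excess V f"
  shows "balancing_state V E f1 (f(x := q))"
proof -
  have "card (moved V (f(x := q)) f1) \<le> card (insert x (moved V f f1))"
    using fV by (intro card_mono) (auto simp: moved_def)
  also have "\<dots> \<le> card (moved V f f1) + 1"
    using fV by (simp add: card_insert_if moved_def)
  finally show ?thesis
    using st linked AB dec unfolding balancing_state_def by auto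
qed

lemma balancing_step:
  fixes V :: "nat set" and f f1 :: "nat \<Rightarrow> part"
  defines "N \<equiv> real (card V)" and "B \<equiv> block V f PB"
  assumes fV: "finite V" and st: "balancing_state V E f1 f"
    and gap: "real (excess V f1) \<le> N / 60"
    and lt: "card (block V f PA) < card B" and not_sparse: "\<not> sparse_B E N B (block V f PS) (block V f PT)"
  shows "\<exists>g. balancing_state V E f1 g \<and> excess V g < excess V f"
proof -
  let ?A1 = "block V f1 PA" and ?B1 = "block V f1 PB"
  have "real (card (moved V f f1)) \<le> N / 60"
    using st gap unfolding balancing_state_def by linarith
  note out_sh = outdeg_block_shift[OF fV this, of E PB] and in_sh = indeg_block_shift[OF fV this, of E PB]
  have linked: "linked E ?A1 ?B1 (N / 30) (f x) x" if "x \<in> V" for x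
    using st that unfolding balancing_state_def N_def by blast
  have move: "\<exists>g. balancing_state V E f1 g \<and> excess V g < excess V f"
    if x: "x \<in> V" "f x = p" and q: "q \<noteq> p" and pq: "p = PB \<and> q \<noteq> PA \<or> p \<noteq> PB \<and> q = PA"
      and lq: "linked E ?A1 ?B1 (N / 30) q x" for x p q
  proof (intro exI conjI)
    have "card (block V (f(x := q)) PA) \<le> card (block V (f(x := q)) PB)
          \<and> excess V (f(x := q)) < excess V f"
      using pq lt card_block_fun_upd[OF fV x(1), of f q] x(2) q
      unfolding excess_def B_def by (cases q) auto
    then show "balancing_state V E f1 (f(x := q))" "excess V (f(x := q)) < excess V f"
      using balancing_move[OF fV st x(1) lq[unfolded N_def]] by blast+
  qed
  consider (B_out) x where "x \<in> B" "N / 20 \<le> real (outdeg E B x)"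
    | (B_in) x where "x \<in> B" "N / 20 \<le> real (indeg E B x)"
    | (S_in) x where "x \<in> block V f PS" "N / 20 \<le> real (indeg E B x)"
    | (T_out) x where "x \<in> block V f PT" "N / 20 \<le> real (outdeg E B x)"
    using not_sparse unfolding sparse_B_def by (auto simp: not_less)
  then show ?thesis
  proof cases
    case (B_out x)
    then show ?thesis
      using move[of x PB PS] linked[of x] out_sh[of x]
      unfolding linked_def B_def by (auto simp: block_def)
  next
    case (B_in x)
    then show ?thesis
      using move[of x PB PT] linked[of x] in_sh[of x]
      unfolding linked_def B_def by (auto simp: block_def)
  next
    case (S_in x)
    then show ?thesis
      using move[of x PS PA] linked[of x] in_sh[of x]
      unfolding linked_def B_def by (auto simp: block_def)
  next
    case (T_out x)
    then show ?thesis
      using move[of x PT PA] linked[of x] out_sh[of x]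
      unfolding linked_def B_def by (auto simp: block_def)
  qed
qed

lemma balancing:
  fixes V :: "nat set" and f f1 :: "nat \<Rightarrow> part"
  defines "N \<equiv> real (card V)"
  assumes fV: "finite V" and gap: "real (excess V f1) \<le> N / 60" and st: "balancing_state V E f1 f"
  shows "\<exists>g. balancing_state V E f1 g \<and>
           (card (block V g PA) < card (block V g PB) \<longrightarrow>
              sparse_B E N (block V g PB) (block V g PS) (block V g PT))"
  using st
proof (induction "excess V f" arbitrary: f rule: less_induct)
  case less
  show ?case
  proof (cases "card (block V f PA) < card (block V f PB) \<longrightarrow>
                  sparse_B E N (block V f PB) (block V f PS) (block V f PT)")
    case True
    then show ?thesis using less.prems by blast
  next
    case False
    then obtain g where "balancing_state V E f1 g" "excess V g < excess V f"
      using balancing_step[OF fV less.prems gap[unfolded N_def]] unfolding N_def by blast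
    then show ?thesis using less.hyps by blast
  qed
qed

text \<open>The situation in case (Q) before balancing: A1 and B1 are almost halves, S1 and T1 are
  tiny, every vertex is linked, and the vertices in G, all but \<beta>N of them, are almost completely
  joined to the opposite one of A1 and B1.\<close>

locale Q_stage =
  fixes V :: "nat set" and E :: "(nat \<times> nat) set" and G :: "nat set" and f1 :: "nat \<Rightarrow> part"
    and \<beta> \<gamma> :: real
  assumes finite_V: "finite V" and G: "G \<subseteq> V" "real (card (V - G)) \<le> \<beta> * real (card V)"
    and good_A: "\<And>x. x \<in> G \<Longrightarrow> f1 x = PA \<Longrightarrow>
           real (card V) / 2 - \<gamma> * real (card V) \<le> real (outdeg E (block V f1 PB) x)
         \<and> real (card V) / 2 - \<gamma> * real (card V) \<le> real (indeg E (block V f1 PB) x)"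
    and good_B: "\<And>x. x \<in> G \<Longrightarrow> f1 x = PB \<Longrightarrow>
           real (card V) / 2 - \<gamma> * real (card V) \<le> real (outdeg E (block V f1 PA) x)
         \<and> real (card V) / 2 - \<gamma> * real (card V) \<le> real (indeg E (block V f1 PA) x)"
    and sizes: "\<bar>real (card (block V f1 PA)) - real (card V) / 2\<bar> \<le> \<gamma> * real (card V)"
      "\<bar>real (card (block V f1 PB)) - real (card V) / 2\<bar> \<le> \<gamma> * real (card V)"
      "real (card (block V f1 PS)) + real (card (block V f1 PT)) \<le> \<gamma> * real (card V)"
    and linked: "\<And>x. x \<in> V \<Longrightarrow>
           linked E (block V f1 PA) (block V f1 PB) (real (card V) / 30) (f1 x) x"
    and constants: "0 \<le> \<beta>" "0 \<le> \<gamma>" "\<gamma> \<le> 1/1000"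
begin

abbreviation "N \<equiv> real (card V)"
abbreviation "A1 \<equiv> block V f1 PA"
abbreviation "B1 \<equiv> block V f1 PB"

context
  fixes \<epsilon>\<^sub>3 :: real and f :: "nat \<Rightarrow> part"
  assumes Q_constant: "\<beta> + 6 * \<gamma> \<le> \<epsilon>\<^sub>3" and Q_state: "balancing_state V E f1 f"
begin

lemma Q_scale: "\<beta> * N + 6 * (\<gamma> * N) \<le> \<epsilon>\<^sub>3 * N" "\<gamma> * N \<le> N / 1000" "0 \<le> \<beta> * N" "0 \<le> \<gamma> * N"
  using mult_right_mono[OF Q_constant, of N] mult_right_mono[OF constants(3), of N] constants(1,2)
  by (simp_all add: algebra_simps)

lemma Q_moved: "real (card (moved V f f1)) \<le> 2 * \<gamma> * N"
proof -
  have "real (excess V f1) \<le> 2 * \<gamma> * N"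
  proof (cases "card A1 \<le> card B1")
    case True
    then show ?thesis
      using sizes(1,2) unfolding excess_def abs_le_iff by (simp add: of_nat_diff)
  qed (use Q_scale in \<open>simp add: excess_def mult.commute\<close>)
  then show ?thesis
    using Q_state unfolding balancing_state_def by linarith
qed

lemma Q_sizes:
  "real_of_int \<lfloor>N / 2\<rfloor> - \<epsilon>\<^sub>3 * N \<le> real (card (block V f PA))"
  "real (card (block V f PA)) \<le> real_of_int \<lceil>N / 2\<rceil> + \<epsilon>\<^sub>3 * N"
  "real_of_int \<lfloor>N / 2\<rfloor> - \<epsilon>\<^sub>3 * N \<le> real (card (block V f PB))"
  "real (card (block V f PB)) \<le> real_of_int \<lceil>N / 2\<rceil> + \<epsilon>\<^sub>3 * N"
  "real (card (block V f PS)) + real (card (block V f PT)) \<le> \<epsilon>\<^sub>3 * N"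
proof -
  note card_sh = card_block_shift[OF finite_V Q_moved]
  have "real_of_int \<lfloor>N / 2\<rfloor> \<le> N / 2" "N / 2 \<le> real_of_int \<lceil>N / 2\<rceil>"
    by (rule of_int_floor_le, rule le_of_int_ceiling)
  then show "real_of_int \<lfloor>N / 2\<rfloor> - \<epsilon>\<^sub>3 * N \<le> real (card (block V f PA))"
    "real (card (block V f PA)) \<le> real_of_int \<lceil>N / 2\<rceil> + \<epsilon>\<^sub>3 * N"
    "real_of_int \<lfloor>N / 2\<rfloor> - \<epsilon>\<^sub>3 * N \<le> real (card (block V f PB))"
    "real (card (block V f PB)) \<le> real_of_int \<lceil>N / 2\<rceil> + \<epsilon>\<^sub>3 * N"
    using card_sh[of PA] card_sh[of PB] sizes(1,2) Q_scale unfolding abs_le_iff by linarith+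
  show "real (card (block V f PS)) + real (card (block V f PT)) \<le> \<epsilon>\<^sub>3 * N"
    using card_sh[of PS] card_sh[of PT] sizes(3) Q_scale by linarith
qed

lemma Q_min_degrees:
  "bip_semideg_ge E (block V f PA) (block V f PB) (N / 50)"
  "\<forall>x\<in>block V f PS. N / 50 \<le> real (indeg E (block V f PA) x) \<and> N / 50 \<le> real (outdeg E (block V f PB) x)"
  "\<forall>x\<in>block V f PT. N / 50 \<le> real (indeg E (block V f PB) x) \<and> N / 50 \<le> real (outdeg E (block V f PA) x)"
proof -
  have "linked E (block V f PA) (block V f PB) (N / 50) (f x) x" if "x \<in> V" for x
  proof (rule linked_block_shift[OF finite_V Q_moved])
    show "linked E A1 B1 (N / 30) (f x) x"
      using Q_state that unfolding balancing_state_def by blast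
  qed (use Q_scale in linarith)
  then have lk: "linked E (block V f PA) (block V f PB) (N / 50) p x" if "x \<in> block V f p" for x p
    using that by (auto simp: block_def)
  show "bip_semideg_ge E (block V f PA) (block V f PB) (N / 50)"
    unfolding bip_semideg_ge_def using lk[of _ PA] lk[of _ PB] by (simp add: linked_def)
  show "\<forall>x\<in>block V f PS. N / 50 \<le> real (indeg E (block V f PA) x) \<and> N / 50 \<le> real (outdeg E (block V f PB) x)"
    "\<forall>x\<in>block V f PT. N / 50 \<le> real (indeg E (block V f PB) x) \<and> N / 50 \<le> real (outdeg E (block V f PA) x)"
    using lk[of _ PS] lk[of _ PT] by (simp_all add: linked_def)
qed

lemma Q_exceptions:
  "real (card {x \<in> block V f PA. \<not> (N / 2 - \<epsilon>\<^sub>3 * N \<le> real (outdeg E (block V f PB) x)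
                                    \<and> N / 2 - \<epsilon>\<^sub>3 * N \<le> real (indeg E (block V f PB) x))}) \<le> \<epsilon>\<^sub>3 * N"
  "real (card {x \<in> block V f PB. \<not> (N / 2 - \<epsilon>\<^sub>3 * N \<le> real (outdeg E (block V f PA) x)
                                    \<and> N / 2 - \<epsilon>\<^sub>3 * N \<le> real (indeg E (block V f PA) x))}) \<le> \<epsilon>\<^sub>3 * N"
proof -
  note out_sh = outdeg_block_shift[OF finite_V Q_moved, of E] and in_sh = indeg_block_shift[OF finite_V Q_moved, of E]
  have exc: "real (card C) \<le> \<epsilon>\<^sub>3 * N" if "C \<subseteq> (V - G) \<union> moved V f f1" for C
  proof -
    have "card C \<le> card (V - G) + card (moved V f f1)"
      using that finite_V card_mono[of "(V - G) \<union> moved V f f1" C] card_Un_le[of "V - G" "moved V f f1"]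
      by (auto simp: moved_def)
    then show ?thesis using G(2) Q_moved Q_scale by linarith
  qed
  have kept: "x \<in> G" "f1 x = p" if "x \<in> block V f p" "x \<notin> (V - G) \<union> moved V f f1" for x p
    using that by (auto simp: block_def moved_def)
  show "real (card {x \<in> block V f PA. \<not> (N / 2 - \<epsilon>\<^sub>3 * N \<le> real (outdeg E (block V f PB) x)
                                    \<and> N / 2 - \<epsilon>\<^sub>3 * N \<le> real (indeg E (block V f PB) x))}) \<le> \<epsilon>\<^sub>3 * N"
  proof (rule exc, rule subsetI, rule ccontr)
    fix x assume x: "x \<in> {x \<in> block V f PA. \<not> (N / 2 - \<epsilon>\<^sub>3 * N \<le> real (outdeg E (block V f PB) x)
                                    \<and> N / 2 - \<epsilon>\<^sub>3 * N \<le> real (indeg E (block V f PB) x))}"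
      and "x \<notin> (V - G) \<union> moved V f f1"
    then have "x \<in> G" "f1 x = PA" using kept by auto
    then show False using x good_A out_sh[of PB x] in_sh[of PB x] Q_scale by fastforce
  qed
  show "real (card {x \<in> block V f PB. \<not> (N / 2 - \<epsilon>\<^sub>3 * N \<le> real (outdeg E (block V f PA) x)
                                    \<and> N / 2 - \<epsilon>\<^sub>3 * N \<le> real (indeg E (block V f PA) x))}) \<le> \<epsilon>\<^sub>3 * N"
  proof (rule exc, rule subsetI, rule ccontr)
    fix x assume x: "x \<in> {x \<in> block V f PB. \<not> (N / 2 - \<epsilon>\<^sub>3 * N \<le> real (outdeg E (block V f PA) x)
                                    \<and> N / 2 - \<epsilon>\<^sub>3 * N \<le> real (indeg E (block V f PA) x))}"
      and "x \<notin> (V - G) \<union> moved V f f1"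
    then have "x \<in> G" "f1 x = PB" using kept by auto
    then show False using x good_B out_sh[of PA x] in_sh[of PA x] Q_scale by fastforce
  qed
qed

lemma condQ_of_balanced:
  assumes "card (block V f PA) < card (block V f PB) \<longrightarrow>
             sparse_B E N (block V f PB) (block V f PS) (block V f PT)"
  shows "condQ \<epsilon>\<^sub>3 V E (block V f PA) (block V f PB) (block V f PS) (block V f PT)"
proof -
  have "real (card (block V f PA)) < real (card (block V f PB)) \<longrightarrow>
          sparse_B E N (block V f PB) (block V f PS) (block V f PT)"
    using assms by simp
  then show ?thesis
    using Q_sizes Q_min_degrees Q_exceptions unfolding condQ_def Let_def sparse_B_def by blast
qed

end

lemma condQ_exists_ordered:
  assumes \<epsilon>\<^sub>3: "\<beta> + 6 * \<gamma> \<le> \<epsilon>\<^sub>3" and ordered: "card A1 \<le> card B1"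
  shows "\<exists>A B S T. partition4 V A B S T \<and> condQ \<epsilon>\<^sub>3 V E A B S T \<and> card A \<le> card B"
proof -
  have "real (excess V f1) \<le> N / 60"
    using sizes(1,2) ordered mult_right_mono[OF constants(3), of N]
    unfolding excess_def abs_le_iff by (simp add: of_nat_diff)
  moreover have "balancing_state V E f1 f1"
    using linked ordered unfolding balancing_state_def moved_def by simp
  ultimately obtain g where st: "balancing_state V E f1 g"
    and Q8: "card (block V g PA) < card (block V g PB) \<longrightarrow>
               sparse_B E N (block V g PB) (block V g PS) (block V g PT)"
    using balancing[OF finite_V] by blast
  have "card (block V g PA) \<le> card (block V g PB)"
    using st unfolding balancing_state_def by blast
  then show ?thesis
    using condQ_of_balanced[OF \<epsilon>\<^sub>3 st Q8] partition4_blocks by blast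
qed

lemma condQ_exists:
  assumes \<epsilon>\<^sub>3: "\<beta> + 6 * \<gamma> \<le> \<epsilon>\<^sub>3"
  shows "\<exists>A B S T. partition4 V A B S T \<and> condQ \<epsilon>\<^sub>3 V E A B S T \<and> card A \<le> card B"
proof (cases "card A1 \<le> card B1")
  case True
  then show ?thesis using condQ_exists_ordered[OF \<epsilon>\<^sub>3] by blast
next
  case False
  interpret swapped: Q_stage V E G "swap_part \<circ> f1" \<beta> \<gamma>
    using finite_V G good_A good_B sizes linked constants
    by unfold_locales (auto simp: block_swap_part linked_swap_part swap_part_eq_iff)
  show ?thesis
    using swapped.condQ_exists_ordered[OF \<epsilon>\<^sub>3] False by (simp add: block_swap_part)
qed

end

section \<open>The reference partition\<close>

text \<open>The parameter d plays the role of \<surd>\<epsilon>: the reference partition f0 spans fewer than d^2 N^2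
  edges from A0 \<union> S0 to A0 \<union> T0.\<close>

locale extremal_reference =
  fixes V :: "nat set" and E :: "(nat \<times> nat) set" and f0 :: "nat \<Rightarrow> part" and d :: real
  assumes finite_V: "finite V"
    and min_semideg: "semideg_ge E V (real (card V) / 2)"
    and balanced: "\<bar>real (card (block V f0 PA)) - real (card (block V f0 PB))\<bar> \<le> 1"
                  "\<bar>real (card (block V f0 PS)) - real (card (block V f0 PT))\<bar> \<le> 1"
    and sparse: "real (ecount E (block V f0 PA \<union> block V f0 PS) (block V f0 PA \<union> block V f0 PT))
                   < d\<^sup>2 * (real (card V))\<^sup>2"
    and d_pos: "0 < d" and d_le_1: "d \<le> 1" and d_large: "1 \<le> d\<^sup>2 * real (card V)"
begin

abbreviation "A0 \<equiv> block V f0 PA"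
abbreviation "B0 \<equiv> block V f0 PB"
abbreviation "S0 \<equiv> block V f0 PS"
abbreviation "T0 \<equiv> block V f0 PT"
abbreviation "N \<equiv> real (card V)"
abbreviation "a0 \<equiv> real (card A0)"
abbreviation "b0 \<equiv> real (card B0)"
abbreviation "s0 \<equiv> real (card S0)"
abbreviation "t0 \<equiv> real (card T0)"
abbreviation "typ \<equiv> typical E d N (A0 \<union> S0) (A0 \<union> T0)"

lemma sizes: "N = a0 + b0 + s0 + t0" "a0 \<le> b0 + 1" "b0 \<le> a0 + 1" "s0 \<le> t0 + 1" "t0 \<le> s0 + 1"
  using card_blocks[OF finite_V, of f0] balanced by auto

lemma dN_ge_1: "1 \<le> d * N"
proof -
  have "d * d * N \<le> 1 * d * N"
    using d_le_1 d_pos by (intro mult_right_mono) auto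
  then show ?thesis using d_large by (simp add: power2_eq_square)
qed

lemma mult_N_mono: "c \<le> c' \<Longrightarrow> c * N \<le> c' * N"
  by (simp add: mult_right_mono)

lemma outdeg_block_le: "real (outdeg E (block V f p) x) \<le> real (card (block V f p))"
  using outdeg_le_card[OF finite_block[OF finite_V]] by simp

lemma indeg_block_le: "real (indeg E (block V f p) x) \<le> real (card (block V f p))"
  using indeg_le_card[OF finite_block[OF finite_V]] by simp

lemma outdeg_sum:
  "x \<in> V \<Longrightarrow> N / 2 \<le> real (outdeg E A0 x) + real (outdeg E B0 x) + real (outdeg E S0 x) + real (outdeg E T0 x)"
  using min_semideg outdeg_blocks[OF finite_V, of E x f0] unfolding semideg_ge_def by auto

lemma indeg_sum:
  "x \<in> V \<Longrightarrow> N / 2 \<le> real (indeg E A0 x) + real (indeg E B0 x) + real (indeg E S0 x) + real (indeg E T0 x)"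
  using min_semideg indeg_blocks[OF finite_V, of E x f0] unfolding semideg_ge_def by auto

lemma card_atypical: "real (card {x \<in> V. \<not> typ x}) \<le> 4 * d * N"
proof (rule card_not_typical_le)
  have "V - (A0 \<union> S0) = B0 \<union> T0" "V - (A0 \<union> T0) = B0 \<union> S0"
    by (auto simp: block_def intro: part.exhaust)
  moreover have "card (B0 \<union> T0) = card B0 + card T0" "card (B0 \<union> S0) = card B0 + card S0"
    by (simp_all add: card_Un_disjoint finite_block finite_V block_disjoint)
  ultimately show "real (card (V - (A0 \<union> S0))) \<le> N / 2 + 1" "real (card (V - (A0 \<union> T0))) \<le> N / 2 + 1"
    using sizes by (simp_all add: field_simps)
qed (use finite_V min_semideg sparse d_pos d_large in \<open>auto simp: block_def\<close>)

lemma card_exceptions_le: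
  assumes "C \<subseteq> V" "\<And>x. x \<in> C \<Longrightarrow> typ x \<Longrightarrow> P x"
  shows "real (card {x \<in> C. \<not> P x}) \<le> 4 * d * N"
proof -
  have "card {x \<in> C. \<not> P x} \<le> card {x \<in> V. \<not> typ x}"
    using assms finite_V by (intro card_mono) auto
  then show ?thesis using card_atypical by linarith
qed

lemma card_moved_le:
  assumes "\<And>x. x \<in> V \<Longrightarrow> typ x \<Longrightarrow> f x = f0 x"
  shows "real (card (moved V f f0)) \<le> 4 * d * N"
  using card_exceptions_le[of V "\<lambda>x. f x = f0 x"] assms unfolding moved_def by simp

lemma out_in_Un:
  "outdeg E (A0 \<union> T0) x = outdeg E A0 x + outdeg E T0 x"
  "indeg E (A0 \<union> S0) x = indeg E A0 x + indeg E S0 x"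
  "card (A0 \<union> T0) = card A0 + card T0" "card (A0 \<union> S0) = card A0 + card S0"
  by (simp_all add: outdeg_Un indeg_Un card_Un_disjoint finite_block finite_V block_disjoint)

lemma typical_out_small:
  "typ x \<Longrightarrow> x \<in> A0 \<union> S0 \<Longrightarrow> real (outdeg E A0 x) + real (outdeg E T0 x) < d * N"
  unfolding typical_def out_typical_def out_in_Un by auto

lemma typical_in_small:
  "typ x \<Longrightarrow> x \<in> A0 \<union> T0 \<Longrightarrow> real (indeg E A0 x) + real (indeg E S0 x) < d * N"
  unfolding typical_def out_typical_def by (auto simp: out_in_Un)

lemma typical_out_large:
  assumes "typ x" "x \<in> B0 \<union> T0"
  shows "a0 + t0 - 2 * d * N < real (outdeg E A0 x) + real (outdeg E T0 x)"
proof -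
  have "x \<notin> A0 \<union> S0" using assms(2) by (auto simp: block_def)
  then show ?thesis using assms(1) unfolding typical_def out_typical_def out_in_Un by simp
qed

lemma typical_in_large:
  assumes "typ x" "x \<in> B0 \<union> S0"
  shows "a0 + s0 - 2 * d * N < real (indeg E A0 x) + real (indeg E S0 x)"
proof -
  have "x \<notin> A0 \<union> T0" using assms(2) by (auto simp: block_def)
  then show ?thesis using assms(1) unfolding typical_def out_typical_def by (simp add: out_in_Un)
qed

lemma typical_degrees:
  assumes x: "typ x" "x \<in> V"
  shows "f0 x = PA \<Longrightarrow> N / 2 - s0 - d * N < real (outdeg E B0 x)"
    and "f0 x = PA \<Longrightarrow> N / 2 - t0 - d * N < real (indeg E B0 x)"
    and "f0 x = PB \<Longrightarrow> a0 - 2 * d * N < real (outdeg E A0 x)"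
    and "f0 x = PB \<Longrightarrow> a0 - 2 * d * N < real (indeg E A0 x)"
    and "f0 x = PS \<Longrightarrow> N / 2 - d * N < real (outdeg E B0 x) + real (outdeg E S0 x)"
    and "f0 x = PS \<Longrightarrow> a0 + s0 - 2 * d * N < real (indeg E A0 x) + real (indeg E S0 x)"
    and "f0 x = PT \<Longrightarrow> a0 + t0 - 2 * d * N < real (outdeg E A0 x) + real (outdeg E T0 x)"
    and "f0 x = PT \<Longrightarrow> N / 2 - d * N < real (indeg E B0 x) + real (indeg E T0 x)"
proof -
  have inblock: "f0 x = p \<Longrightarrow> x \<in> block V f0 p" for p
    using x(2) by (simp add: block_def)
  note sum = outdeg_sum[OF x(2)] indeg_sum[OF x(2)]
  show "N / 2 - s0 - d * N < real (outdeg E B0 x)" "N / 2 - t0 - d * N < real (indeg E B0 x)"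
    if "f0 x = PA"
  proof -
    have mem: "x \<in> A0 \<union> S0" "x \<in> A0 \<union> T0" using inblock[OF that] by auto
    show "N / 2 - s0 - d * N < real (outdeg E B0 x)" "N / 2 - t0 - d * N < real (indeg E B0 x)"
      using typical_out_small[OF x(1) mem(1)] typical_in_small[OF x(1) mem(2)] sum
        outdeg_block_le[of f0 PS x] indeg_block_le[of f0 PT x] by linarith+
  qed
  show "a0 - 2 * d * N < real (outdeg E A0 x)" "a0 - 2 * d * N < real (indeg E A0 x)" if "f0 x = PB"
  proof -
    have mem: "x \<in> B0 \<union> T0" "x \<in> B0 \<union> S0" using inblock[OF that] by auto
    show "a0 - 2 * d * N < real (outdeg E A0 x)" "a0 - 2 * d * N < real (indeg E A0 x)"
      using typical_out_large[OF x(1) mem(1)] typical_in_large[OF x(1) mem(2)]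
        outdeg_block_le[of f0 PT x] indeg_block_le[of f0 PS x] by linarith+
  qed
  show "N / 2 - d * N < real (outdeg E B0 x) + real (outdeg E S0 x)"
    "a0 + s0 - 2 * d * N < real (indeg E A0 x) + real (indeg E S0 x)" if "f0 x = PS"
  proof -
    have mem: "x \<in> A0 \<union> S0" "x \<in> B0 \<union> S0" using inblock[OF that] by auto
    show "N / 2 - d * N < real (outdeg E B0 x) + real (outdeg E S0 x)"
      "a0 + s0 - 2 * d * N < real (indeg E A0 x) + real (indeg E S0 x)"
      using typical_out_small[OF x(1) mem(1)] typical_in_large[OF x(1) mem(2)] sum by linarith+
  qed
  show "a0 + t0 - 2 * d * N < real (outdeg E A0 x) + real (outdeg E T0 x)"
    "N / 2 - d * N < real (indeg E B0 x) + real (indeg E T0 x)" if "f0 x = PT"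
  proof -
    have mem: "x \<in> B0 \<union> T0" "x \<in> A0 \<union> T0" using inblock[OF that] by auto
    show "a0 + t0 - 2 * d * N < real (outdeg E A0 x) + real (outdeg E T0 x)"
      "N / 2 - d * N < real (indeg E B0 x) + real (indeg E T0 x)"
      using typical_out_large[OF x(1) mem(1)] typical_in_small[OF x(1) mem(2)] sum by linarith+
  qed
qed

lemma typical_near_complete:
  fixes f :: "nat \<Rightarrow> part" and x :: nat
  defines "out \<equiv> \<lambda>X. real (outdeg E X x)" and "inn \<equiv> \<lambda>X. real (indeg E X x)"
    and "A \<equiv> block V f PA" and "B \<equiv> block V f PB" and "S \<equiv> block V f PS" and "T \<equiv> block V f PT"
  assumes m: "real (card (moved V f f0)) \<le> 4 * d * N" and x: "typ x" "x \<in> V"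
  shows "f0 x = PA \<Longrightarrow> real (card B) - 20 * d * N \<le> out B \<and> real (card B) - 20 * d * N \<le> inn B"
    and "f0 x = PB \<Longrightarrow> real (card A) - 20 * d * N \<le> out A \<and> real (card A) - 20 * d * N \<le> inn A"
    and "f0 x = PS \<Longrightarrow> real (card B) + real (card S) - 20 * d * N \<le> out (B \<union> S)
                       \<and> real (card A) + real (card S) - 20 * d * N \<le> inn (A \<union> S)"
    and "f0 x = PT \<Longrightarrow> real (card A) + real (card T) - 20 * d * N \<le> out (A \<union> T)
                       \<and> real (card B) + real (card T) - 20 * d * N \<le> inn (B \<union> T)"
proof -
  note out_sh = outdeg_block_shift[OF finite_V m, of E _ x]
  note in_sh = indeg_block_shift[OF finite_V m, of E _ x]
  note card_sh = card_block_shift[OF finite_V m]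
  have Un: "out (B \<union> S) = out B + out S" "inn (A \<union> S) = inn A + inn S"
           "out (A \<union> T) = out A + out T" "inn (B \<union> T) = inn B + inn T"
    unfolding out_def inn_def A_def B_def S_def T_def
    by (simp_all add: outdeg_block_Un indeg_block_Un finite_V)
  note deg = typical_degrees[OF x]
  show "real (card B) - 20 * d * N \<le> out B \<and> real (card B) - 20 * d * N \<le> inn B" if "f0 x = PA"
    using deg(1,2)[OF that] out_sh[of PB] in_sh[of PB] card_sh[of PB] sizes dN_ge_1
    unfolding out_def inn_def B_def by (intro conjI) linarith+
  show "real (card A) - 20 * d * N \<le> out A \<and> real (card A) - 20 * d * N \<le> inn A" if "f0 x = PB"
    using deg(3,4)[OF that] out_sh[of PA] in_sh[of PA] card_sh[of PA] sizes dN_ge_1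
    unfolding out_def inn_def A_def by (intro conjI) linarith+
  show "real (card B) + real (card S) - 20 * d * N \<le> out (B \<union> S)
          \<and> real (card A) + real (card S) - 20 * d * N \<le> inn (A \<union> S)" if "f0 x = PS"
    using deg(5,6)[OF that] out_sh[of PB] out_sh[of PS] in_sh[of PA] in_sh[of PS]
      card_sh[of PA] card_sh[of PB] card_sh[of PS] sizes dN_ge_1
    unfolding Un unfolding out_def inn_def A_def B_def S_def by (intro conjI) linarith+
  show "real (card A) + real (card T) - 20 * d * N \<le> out (A \<union> T)
          \<and> real (card B) + real (card T) - 20 * d * N \<le> inn (B \<union> T)" if "f0 x = PT"
    using deg(7,8)[OF that] out_sh[of PA] out_sh[of PT] in_sh[of PB] in_sh[of PT]
      card_sh[of PA] card_sh[of PB] card_sh[of PT] sizes dN_ge_1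
    unfolding Un unfolding out_def inn_def A_def B_def T_def by (intro conjI) linarith+
qed

subsection \<open>Case (P)\<close>

text \<open>Here A0 is small: S and T are rebuilt as the vertices with substantial
  degree inside S0 and inside T0, respectively, and every remaining vertex goes to A or B.\<close>

definition P_assign :: "real \<Rightarrow> nat \<Rightarrow> part" where
  "P_assign \<eta> x =
     (if 2 * \<eta> * N \<le> real (outdeg E S0 x) \<and> 2 * \<eta> * N \<le> real (indeg E S0 x) then PS
      else if 2 * \<eta> * N \<le> real (outdeg E T0 x) \<and> 2 * \<eta> * N \<le> real (indeg E T0 x) then PT
      else if real (indeg E S0 x) < 2 * \<eta> * N then PA
      else PB)"

context
  fixes \<epsilon>\<^sub>3 \<eta>\<^sub>2 \<tau> :: real
  assumes P_small: "a0 \<le> 2 * \<tau> * N"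
    and P_constants: "10 * d \<le> \<tau>" "100 * \<tau> \<le> \<epsilon>\<^sub>3" "100 * \<epsilon>\<^sub>3 \<le> \<eta>\<^sub>2" "\<eta>\<^sub>2 \<le> 1/100"
begin

abbreviation "fP \<equiv> P_assign \<eta>\<^sub>2"

lemmas P_scale = mult_N_mono[OF P_constants(1)] mult_N_mono[OF P_constants(2)]
  mult_N_mono[OF P_constants(3)] mult_N_mono[OF P_constants(4)]

lemma P_typical_kept:
  assumes x: "typ x" "x \<in> V" "f0 x = PS \<or> f0 x = PT"
  shows "fP x = f0 x"
  using x(3)
proof
  note bounds = P_small sizes dN_ge_1 P_scale outdeg_block_le[of f0 PB x] indeg_block_le[of f0 PA x]
    outdeg_block_le[of f0 PA x] indeg_block_le[of f0 PB x]
  assume S: "f0 x = PS"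
  have "2 * \<eta>\<^sub>2 * N \<le> real (outdeg E S0 x)" "2 * \<eta>\<^sub>2 * N \<le> real (indeg E S0 x)"
    using typical_degrees(5,6)[OF x(1,2) S] bounds by linarith+
  then show ?thesis using S by (simp add: P_assign_def)
next
  note bounds = P_small sizes dN_ge_1 P_scale outdeg_block_le[of f0 PA x] indeg_block_le[of f0 PB x]
  assume T: "f0 x = PT"
  have "x \<in> A0 \<union> T0" using T x(2) by (simp add: block_def)
  then have "real (indeg E S0 x) < 2 * \<eta>\<^sub>2 * N"
    "2 * \<eta>\<^sub>2 * N \<le> real (outdeg E T0 x)" "2 * \<eta>\<^sub>2 * N \<le> real (indeg E T0 x)"
    using typical_degrees(7,8)[OF x(1,2) T] typical_in_small[OF x(1)] bounds by linarith+
  then show ?thesis using T by (simp add: P_assign_def)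
qed

lemma P_AB_degrees:
  assumes x: "x \<in> V"
  shows "fP x = PA \<Longrightarrow> N / 2 - 2 * \<eta>\<^sub>2 * N - 4 * \<tau> * N - 1 < real (indeg E T0 x)"
    and "fP x = PA \<Longrightarrow> N / 2 - 2 * \<eta>\<^sub>2 * N - 4 * \<tau> * N - 1 < real (outdeg E S0 x)"
    and "fP x = PA \<Longrightarrow> real (indeg E S0 x) < 2 * \<eta>\<^sub>2 * N"
    and "fP x = PA \<Longrightarrow> real (outdeg E T0 x) < 2 * \<eta>\<^sub>2 * N"
    and "fP x = PB \<Longrightarrow> N / 2 - 2 * \<eta>\<^sub>2 * N - 4 * \<tau> * N - 1 < real (indeg E S0 x)"
    and "fP x = PB \<Longrightarrow> N / 2 - 2 * \<eta>\<^sub>2 * N - 4 * \<tau> * N - 1 < real (outdeg E T0 x)"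
    and "fP x = PB \<Longrightarrow> real (indeg E T0 x) < 2 * \<eta>\<^sub>2 * N"
    and "fP x = PB \<Longrightarrow> real (outdeg E S0 x) < 2 * \<eta>\<^sub>2 * N"
proof -
  have K: "2 * \<eta>\<^sub>2 * N \<le> N / 2 - 2 * \<eta>\<^sub>2 * N - 4 * \<tau> * N - 1"
    using P_scale dN_ge_1 by linarith
  have AB: "real (outdeg E A0 x) + real (outdeg E B0 x) \<le> 4 * \<tau> * N + 1"
           "real (indeg E A0 x) + real (indeg E B0 x) \<le> 4 * \<tau> * N + 1"
    using P_small sizes outdeg_block_le[of f0 PA x] outdeg_block_le[of f0 PB x]
      indeg_block_le[of f0 PA x] indeg_block_le[of f0 PB x] by linarith+
  note sum = outdeg_sum[OF x] indeg_sum[OF x]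
  let ?low = "N / 2 - 2 * \<eta>\<^sub>2 * N - 4 * \<tau> * N - 1"
  show "?low < real (indeg E T0 x)" "?low < real (outdeg E S0 x)"
    "real (indeg E S0 x) < 2 * \<eta>\<^sub>2 * N" "real (outdeg E T0 x) < 2 * \<eta>\<^sub>2 * N" if A: "fP x = PA"
  proof -
    have iS: "real (indeg E S0 x) < 2 * \<eta>\<^sub>2 * N" using A by (auto simp: P_assign_def split: if_splits)
    then have iT: "?low < real (indeg E T0 x)" using sum AB by linarith
    then have "real (outdeg E T0 x) < 2 * \<eta>\<^sub>2 * N" using A K by (auto simp: P_assign_def split: if_splits)
    then show "?low < real (indeg E T0 x)" "?low < real (outdeg E S0 x)"
      "real (indeg E S0 x) < 2 * \<eta>\<^sub>2 * N" "real (outdeg E T0 x) < 2 * \<eta>\<^sub>2 * N"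
      using iS iT sum AB by linarith+
  qed
  show "?low < real (indeg E S0 x)" "?low < real (outdeg E T0 x)"
    "real (indeg E T0 x) < 2 * \<eta>\<^sub>2 * N" "real (outdeg E S0 x) < 2 * \<eta>\<^sub>2 * N" if B: "fP x = PB"
  proof -
    have oS: "real (outdeg E S0 x) < 2 * \<eta>\<^sub>2 * N" using B by (auto simp: P_assign_def split: if_splits)
    then have oT: "?low < real (outdeg E T0 x)" using sum AB by linarith
    then have "real (indeg E T0 x) < 2 * \<eta>\<^sub>2 * N" using B K by (auto simp: P_assign_def split: if_splits)
    then show "?low < real (indeg E S0 x)" "?low < real (outdeg E T0 x)"
      "real (indeg E T0 x) < 2 * \<eta>\<^sub>2 * N" "real (outdeg E S0 x) < 2 * \<eta>\<^sub>2 * N"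
      using oS oT sum AB by linarith+
  qed
qed

text \<open>Besides the atypical vertices, only the few vertices of A0 and B0 can change class.\<close>

abbreviation "P_exceptional \<equiv> {x \<in> V. \<not> typ x} \<union> A0 \<union> B0"

lemma P_not_exceptional:
  assumes "x \<in> V" "x \<notin> P_exceptional"
  shows "typ x" "fP x = f0 x" "f0 x = PS \<or> f0 x = PT"
  using assms P_typical_kept[of x] by (auto simp: block_def) (cases "f0 x"; simp)+

lemma card_P_exceptional_le:
  assumes "C \<subseteq> P_exceptional"
  shows "real (card C) \<le> 5 * \<tau> * N"
proof -
  have "card C \<le> card P_exceptional"
    using assms finite_V by (intro card_mono) (auto simp: finite_block)
  also have "\<dots> \<le> card {x \<in> V. \<not> typ x} + card A0 + card B0"
    by (meson card_Un_le add_le_mono le_trans order_refl)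
  finally show ?thesis
    using card_atypical P_small sizes dN_ge_1 P_scale(1) by linarith
qed

lemma P_moved: "real (card (moved V fP f0)) \<le> 5 * \<tau> * N"
  using card_P_exceptional_le[of "moved V fP f0"] P_not_exceptional by (auto simp: moved_def)

lemma P_sizes:
  "real_of_int \<lfloor>N / 2\<rfloor> - \<epsilon>\<^sub>3 * N \<le> real (card (block V fP PS))"
  "real (card (block V fP PS)) \<le> real_of_int \<lceil>N / 2\<rceil> + \<epsilon>\<^sub>3 * N"
  "real_of_int \<lfloor>N / 2\<rfloor> - \<epsilon>\<^sub>3 * N \<le> real (card (block V fP PT))"
  "real (card (block V fP PT)) \<le> real_of_int \<lceil>N / 2\<rceil> + \<epsilon>\<^sub>3 * N"
  "real (card (block V fP PA)) + real (card (block V fP PB)) \<le> \<epsilon>\<^sub>3 * N"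
proof -
  have "real (card (block V fP PA \<union> block V fP PB)) \<le> 5 * \<tau> * N"
    by (rule card_P_exceptional_le) (use P_not_exceptional in \<open>auto simp: block_def\<close>)
  then show "real (card (block V fP PA)) + real (card (block V fP PB)) \<le> \<epsilon>\<^sub>3 * N"
    using P_scale by (simp add: card_block_Un finite_V)
  have "real_of_int \<lfloor>N / 2\<rfloor> \<le> N / 2" "N / 2 \<le> real_of_int \<lceil>N / 2\<rceil>"
    by (rule of_int_floor_le, rule le_of_int_ceiling)
  then show "real_of_int \<lfloor>N / 2\<rfloor> - \<epsilon>\<^sub>3 * N \<le> real (card (block V fP PS))"
    "real (card (block V fP PS)) \<le> real_of_int \<lceil>N / 2\<rceil> + \<epsilon>\<^sub>3 * N"
    "real_of_int \<lfloor>N / 2\<rfloor> - \<epsilon>\<^sub>3 * N \<le> real (card (block V fP PT))"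
    "real (card (block V fP PT)) \<le> real_of_int \<lceil>N / 2\<rceil> + \<epsilon>\<^sub>3 * N"
    using card_block_shift[OF finite_V P_moved, of PS] card_block_shift[OF finite_V P_moved, of PT]
      P_small sizes dN_ge_1 P_scale by linarith+
qed

lemma P_semidegrees: "semideg_ge E (block V fP PS) (\<eta>\<^sub>2 * N)" "semideg_ge E (block V fP PT) (\<eta>\<^sub>2 * N)"
  unfolding semideg_ge_def
proof safe
  fix x assume "x \<in> block V fP PS"
  then have "2 * \<eta>\<^sub>2 * N \<le> real (outdeg E S0 x)" "2 * \<eta>\<^sub>2 * N \<le> real (indeg E S0 x)"
    by (auto simp: block_def P_assign_def split: if_splits)
  then show "\<eta>\<^sub>2 * N \<le> real (outdeg E (block V fP PS) x)" "\<eta>\<^sub>2 * N \<le> real (indeg E (block V fP PS) x)"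
    using outdeg_block_shift[OF finite_V P_moved, of E PS x] indeg_block_shift[OF finite_V P_moved, of E PS x]
      P_scale dN_ge_1 by linarith+
next
  fix x assume "x \<in> block V fP PT"
  then have "2 * \<eta>\<^sub>2 * N \<le> real (outdeg E T0 x)" "2 * \<eta>\<^sub>2 * N \<le> real (indeg E T0 x)"
    by (auto simp: block_def P_assign_def split: if_splits)
  then show "\<eta>\<^sub>2 * N \<le> real (outdeg E (block V fP PT) x)" "\<eta>\<^sub>2 * N \<le> real (indeg E (block V fP PT) x)"
    using outdeg_block_shift[OF finite_V P_moved, of E PT x] indeg_block_shift[OF finite_V P_moved, of E PT x]
      P_scale dN_ge_1 by linarith+
qed

lemma P_exceptions:
  "real (card {x \<in> block V fP PS. \<not> (N / 2 - \<epsilon>\<^sub>3 * N \<le> real (outdeg E (block V fP PS) x)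
                                     \<and> N / 2 - \<epsilon>\<^sub>3 * N \<le> real (indeg E (block V fP PS) x))}) \<le> \<epsilon>\<^sub>3 * N"
  "real (card {x \<in> block V fP PT. \<not> (N / 2 - \<epsilon>\<^sub>3 * N \<le> real (outdeg E (block V fP PT) x)
                                     \<and> N / 2 - \<epsilon>\<^sub>3 * N \<le> real (indeg E (block V fP PT) x))}) \<le> \<epsilon>\<^sub>3 * N"
proof -
  note out_sh = outdeg_block_shift[OF finite_V P_moved, of E] and in_sh = indeg_block_shift[OF finite_V P_moved, of E]
  have S_large: "N / 2 - \<epsilon>\<^sub>3 * N \<le> real (outdeg E (block V fP PS) x)
                  \<and> N / 2 - \<epsilon>\<^sub>3 * N \<le> real (indeg E (block V fP PS) x)"
    if "x \<in> V" "typ x" "f0 x = PS" for x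
    using typical_degrees(5,6)[OF that(2,1,3)] out_sh[of PS x] in_sh[of PS x] P_small sizes dN_ge_1 P_scale
      outdeg_block_le[of f0 PB x] indeg_block_le[of f0 PA x] by (intro conjI) linarith+
  have T_large: "N / 2 - \<epsilon>\<^sub>3 * N \<le> real (outdeg E (block V fP PT) x)
                  \<and> N / 2 - \<epsilon>\<^sub>3 * N \<le> real (indeg E (block V fP PT) x)"
    if "x \<in> V" "typ x" "f0 x = PT" for x
    using typical_degrees(7,8)[OF that(2,1,3)] out_sh[of PT x] in_sh[of PT x] P_small sizes dN_ge_1 P_scale
      outdeg_block_le[of f0 PA x] indeg_block_le[of f0 PB x] by (intro conjI) linarith+
  have small: "real (card C) \<le> \<epsilon>\<^sub>3 * N" if "C \<subseteq> P_exceptional" for C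
    using card_P_exceptional_le[OF that] P_scale by linarith
  show "real (card {x \<in> block V fP PS. \<not> (N / 2 - \<epsilon>\<^sub>3 * N \<le> real (outdeg E (block V fP PS) x)
                                     \<and> N / 2 - \<epsilon>\<^sub>3 * N \<le> real (indeg E (block V fP PS) x))}) \<le> \<epsilon>\<^sub>3 * N"
    by (rule small) (use S_large P_not_exceptional in \<open>auto simp: block_def\<close>)
  show "real (card {x \<in> block V fP PT. \<not> (N / 2 - \<epsilon>\<^sub>3 * N \<le> real (outdeg E (block V fP PT) x)
                                     \<and> N / 2 - \<epsilon>\<^sub>3 * N \<le> real (indeg E (block V fP PT) x))}) \<le> \<epsilon>\<^sub>3 * N"
    by (rule small) (use T_large P_not_exceptional in \<open>auto simp: block_def\<close>)
qed

lemma P_AB_conditions: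
  "\<forall>x\<in>block V fP PA. N / 2 - 3 * \<eta>\<^sub>2 * N < real (indeg E (block V fP PT) x)
      \<and> N / 2 - 3 * \<eta>\<^sub>2 * N < real (outdeg E (block V fP PS) x)
      \<and> real (indeg E (block V fP PS) x) \<le> 3 * \<eta>\<^sub>2 * N \<and> real (outdeg E (block V fP PT) x) \<le> 3 * \<eta>\<^sub>2 * N"
  "\<forall>x\<in>block V fP PB. N / 2 - 3 * \<eta>\<^sub>2 * N < real (indeg E (block V fP PS) x)
      \<and> N / 2 - 3 * \<eta>\<^sub>2 * N < real (outdeg E (block V fP PT) x)
      \<and> real (indeg E (block V fP PT) x) \<le> 3 * \<eta>\<^sub>2 * N \<and> real (outdeg E (block V fP PS) x) \<le> 3 * \<eta>\<^sub>2 * N"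
proof safe
  fix x assume "x \<in> block V fP PA"
  then have "x \<in> V" "fP x = PA" by (simp_all add: block_def)
  note deg = P_AB_degrees(1-4)[OF this]
  note out_sh = outdeg_block_shift[OF finite_V P_moved, of E _ x] and in_sh = indeg_block_shift[OF finite_V P_moved, of E _ x]
  show "N / 2 - 3 * \<eta>\<^sub>2 * N < real (indeg E (block V fP PT) x)"
    "N / 2 - 3 * \<eta>\<^sub>2 * N < real (outdeg E (block V fP PS) x)"
    "real (indeg E (block V fP PS) x) \<le> 3 * \<eta>\<^sub>2 * N" "real (outdeg E (block V fP PT) x) \<le> 3 * \<eta>\<^sub>2 * N"
    using deg out_sh[of PS] out_sh[of PT] in_sh[of PS] in_sh[of PT] P_scale dN_ge_1 by linarith+
next
  fix x assume "x \<in> block V fP PB"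
  then have "x \<in> V" "fP x = PB" by (simp_all add: block_def)
  note deg = P_AB_degrees(5-8)[OF this]
  note out_sh = outdeg_block_shift[OF finite_V P_moved, of E _ x] and in_sh = indeg_block_shift[OF finite_V P_moved, of E _ x]
  show "N / 2 - 3 * \<eta>\<^sub>2 * N < real (indeg E (block V fP PS) x)"
    "N / 2 - 3 * \<eta>\<^sub>2 * N < real (outdeg E (block V fP PT) x)"
    "real (indeg E (block V fP PT) x) \<le> 3 * \<eta>\<^sub>2 * N" "real (outdeg E (block V fP PS) x) \<le> 3 * \<eta>\<^sub>2 * N"
    using deg out_sh[of PS] out_sh[of PT] in_sh[of PS] in_sh[of PT] P_scale dN_ge_1 by linarith+
qed

lemma condP_case: "condP \<epsilon>\<^sub>3 \<eta>\<^sub>2 V E (block V fP PA) (block V fP PB) (block V fP PS) (block V fP PT)"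
  using P_sizes P_semidegrees P_exceptions P_AB_conditions unfolding condP_def Let_def by blast

end

subsection \<open>Case (Q)\<close>

text \<open>Here S0 is small: typical vertices keep their class, and the others are
  sorted by which pair of degrees into A0 and B0 is substantial.\<close>

definition Q_assign :: "nat \<Rightarrow> part" where
  "Q_assign x =
     (if typ x then f0 x
      else if N / 25 \<le> real (outdeg E B0 x) \<and> N / 25 \<le> real (indeg E B0 x) then PA
      else if N / 25 \<le> real (outdeg E A0 x) \<and> N / 25 \<le> real (indeg E A0 x) then PB
      else if N / 25 \<le> real (indeg E A0 x) \<and> N / 25 \<le> real (outdeg E B0 x) then PS
      else PT)"

context
  fixes \<epsilon>\<^sub>3 \<tau> :: real
  assumes Q_small: "s0 \<le> 2 * \<tau> * N" and Q_constants: "10 * d \<le> \<tau>" "100 * \<tau> \<le> \<epsilon>\<^sub>3" "\<epsilon>\<^sub>3 \<le> 1/100"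
begin

lemma Q_scale: "10 * d * N \<le> \<tau> * N" "\<tau> * N \<le> N / 10000" "1 \<le> d * N"
  using mult_N_mono[OF Q_constants(1)] mult_N_mono[of \<tau> "1/10000"] Q_constants d_pos dN_ge_1 by auto

lemma Q_typical_linked:
  assumes x: "typ x" "x \<in> V"
  shows "linked E A0 B0 (N / 25) (f0 x) x"
proof (cases "f0 x")
  case PA
  have "N / 25 \<le> real (outdeg E B0 x)" "N / 25 \<le> real (indeg E B0 x)"
    using typical_degrees(1,2)[OF x PA] Q_scale Q_small sizes by linarith+
  with PA show ?thesis by (simp add: linked_def)
next
  case PB
  have "N / 25 \<le> real (outdeg E A0 x)" "N / 25 \<le> real (indeg E A0 x)"
    using typical_degrees(3,4)[OF x PB] Q_scale Q_small sizes by linarith+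
  with PB show ?thesis by (simp add: linked_def)
next
  case PS
  have "N / 25 \<le> real (indeg E A0 x)" "N / 25 \<le> real (outdeg E B0 x)"
    using typical_degrees(5,6)[OF x PS] Q_scale Q_small sizes
      outdeg_block_le[of f0 PS x] indeg_block_le[of f0 PS x] by linarith+
  with PS show ?thesis by (simp add: linked_def)
next
  case PT
  have "N / 25 \<le> real (indeg E B0 x)" "N / 25 \<le> real (outdeg E A0 x)"
    using typical_degrees(7,8)[OF x PT] Q_scale Q_small sizes
      outdeg_block_le[of f0 PT x] indeg_block_le[of f0 PT x] by linarith+
  with PT show ?thesis by (simp add: linked_def)
qed

lemma Q_fallback:
  assumes x: "x \<in> V"
    and not_A: "\<not> (N / 25 \<le> real (outdeg E B0 x) \<and> N / 25 \<le> real (indeg E B0 x))"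
    and not_B: "\<not> (N / 25 \<le> real (outdeg E A0 x) \<and> N / 25 \<le> real (indeg E A0 x))"
    and not_S: "\<not> (N / 25 \<le> real (indeg E A0 x) \<and> N / 25 \<le> real (outdeg E B0 x))"
  shows "N / 25 \<le> real (indeg E B0 x) \<and> N / 25 \<le> real (outdeg E A0 x)"
proof -
  have AB: "2 * (N / 25) \<le> real (outdeg E A0 x) + real (outdeg E B0 x)"
    "2 * (N / 25) \<le> real (indeg E A0 x) + real (indeg E B0 x)"
    using outdeg_sum[OF x] indeg_sum[OF x] Q_scale Q_small sizes outdeg_block_le[of f0 PS x]
      outdeg_block_le[of f0 PT x] indeg_block_le[of f0 PS x] indeg_block_le[of f0 PT x] by linarith+
  show ?thesis
  proof (cases "real (outdeg E B0 x) < N / 25")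
    case True
    then have oA: "N / 25 \<le> real (outdeg E A0 x)" using AB(1) by linarith
    then have "real (indeg E A0 x) < N / 25" using not_B by auto
    then show ?thesis using AB(2) oA by linarith
  next
    case False
    then have "real (indeg E B0 x) < N / 25" using not_A by auto
    then show ?thesis using AB(2) False not_S by auto
  qed
qed

lemma Q_assign_linked:
  assumes x: "x \<in> V"
  shows "linked E A0 B0 (N / 25) (Q_assign x) x"
proof (cases "typ x")
  case True
  then show ?thesis using Q_typical_linked[OF True x] by (simp add: Q_assign_def)
next
  case False
  then show ?thesis
    by (cases "Q_assign x")
      (use Q_fallback[OF x] in \<open>auto simp: linked_def Q_assign_def split: if_splits\<close>)
qed

lemma Q_assign_moved: "real (card (moved V Q_assign f0)) \<le> 4 * d * N"
  by (rule card_moved_le) (simp add: Q_assign_def)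

lemma Q_stage_Q_assign: "Q_stage V E {x \<in> V. typ x} Q_assign (4 * d) (5 * \<tau>)"
proof unfold_locales
  note out_sh = outdeg_block_shift[OF finite_V Q_assign_moved, of E]
    and in_sh = indeg_block_shift[OF finite_V Q_assign_moved, of E]
    and card_sh = card_block_shift[OF finite_V Q_assign_moved]
  have "V - {x \<in> V. typ x} = {x \<in> V. \<not> typ x}" by blast
  then show "real (card (V - {x \<in> V. typ x})) \<le> 4 * d * N"
    using card_atypical by simp
  have kept: "typ x" "x \<in> V" "f0 x = p" if "x \<in> {x \<in> V. typ x}" "Q_assign x = p" for x p
    using that by (simp_all add: Q_assign_def)
  show "N / 2 - 5 * \<tau> * N \<le> real (outdeg E (block V Q_assign PB) x)
      \<and> N / 2 - 5 * \<tau> * N \<le> real (indeg E (block V Q_assign PB) x)"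
    if "x \<in> {x \<in> V. typ x}" "Q_assign x = PA" for x
    using typical_degrees(1,2)[OF kept[OF that]] out_sh[of PB x] in_sh[of PB x] Q_small sizes Q_scale
    by (intro conjI) linarith+
  show "N / 2 - 5 * \<tau> * N \<le> real (outdeg E (block V Q_assign PA) x)
      \<and> N / 2 - 5 * \<tau> * N \<le> real (indeg E (block V Q_assign PA) x)"
    if "x \<in> {x \<in> V. typ x}" "Q_assign x = PB" for x
    using typical_degrees(3,4)[OF kept[OF that]] out_sh[of PA x] in_sh[of PA x] Q_small sizes Q_scale
    by (intro conjI) linarith+
  show "\<bar>real (card (block V Q_assign PA)) - N / 2\<bar> \<le> 5 * \<tau> * N"
    "\<bar>real (card (block V Q_assign PB)) - N / 2\<bar> \<le> 5 * \<tau> * N"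
    "real (card (block V Q_assign PS)) + real (card (block V Q_assign PT)) \<le> 5 * \<tau> * N"
    using card_sh[of PA] card_sh[of PB] card_sh[of PS] card_sh[of PT] Q_small sizes Q_scale
    unfolding abs_le_iff by linarith+
  show "linked E (block V Q_assign PA) (block V Q_assign PB) (N / 30) (Q_assign x) x" if "x \<in> V" for x
    by (rule linked_block_shift[OF finite_V Q_assign_moved _ Q_assign_linked[OF that]])
      (use Q_scale in linarith)
qed (use finite_V Q_constants d_pos in auto)

lemma condQ_case: "\<exists>A B S T. partition4 V A B S T \<and> condQ \<epsilon>\<^sub>3 V E A B S T \<and> card A \<le> card B"
  by (rule Q_stage.condQ_exists[OF Q_stage_Q_assign]) (use Q_constants d_pos in linarith)

end

subsection \<open>Case (R)\<close>

text \<open>Here A0 and S0 are both large: typical vertices keep their class, and the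
  others are sent to a class into which their degrees are substantial.\<close>

definition R_assign :: "real \<Rightarrow> nat \<Rightarrow> part" where
  "R_assign \<eta> x =
     (if typ x then f0 x
      else if 2 * \<eta> * N \<le> real (outdeg E B0 x) + real (outdeg E S0 x)
            \<and> 2 * \<eta> * N \<le> real (indeg E A0 x) + real (indeg E S0 x) then PS
      else if 2 * \<eta> * N \<le> real (outdeg E A0 x) + real (outdeg E T0 x)
            \<and> 2 * \<eta> * N \<le> real (indeg E B0 x) + real (indeg E T0 x) then PT
      else if 2 * \<eta> * N \<le> real (outdeg E B0 x) \<and> 2 * \<eta> * N \<le> real (indeg E B0 x) then PA
      else PB)"

lemma R_fallback:
  fixes th :: real and x :: nat
  defines "oA \<equiv> real (outdeg E A0 x)" and "oB \<equiv> real (outdeg E B0 x)"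
    and "oS \<equiv> real (outdeg E S0 x)" and "oT \<equiv> real (outdeg E T0 x)"
    and "iA \<equiv> real (indeg E A0 x)" and "iB \<equiv> real (indeg E B0 x)"
    and "iS \<equiv> real (indeg E S0 x)" and "iT \<equiv> real (indeg E T0 x)"
  assumes x: "x \<in> V" and th: "4 * th + 1 \<le> a0" "4 * th \<le> N"
    and not_S: "\<not> (th \<le> oB + oS \<and> th \<le> iA + iS)"
    and not_T: "\<not> (th \<le> oA + oT \<and> th \<le> iB + iT)"
    and not_A: "\<not> (th \<le> oB \<and> th \<le> iB)"
  shows "th \<le> oA \<and> th \<le> iA"
proof -
  note deg = outdeg_sum[OF x] indeg_sum[OF x] outdeg_block_le[of f0 PS x] outdeg_block_le[of f0 PT x]
    indeg_block_le[of f0 PS x] indeg_block_le[of f0 PT x] sizes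
  have oBS: "oB + oS < th"
  proof (rule ccontr)
    assume "\<not> oB + oS < th"
    then have "iA + iS < th" using not_S by auto
    then have "th \<le> iB + iT" and iB: "th \<le> iB" using deg th unfolding iA_def iB_def iS_def iT_def
      by linarith+
    then have "oA + oT < th" using not_T by auto
    then have "th \<le> oB" using deg th unfolding oA_def oB_def oS_def oT_def by linarith
    then show False using iB not_A by auto
  qed
  then have "th \<le> oA + oT" using deg th unfolding oA_def oB_def oS_def oT_def by linarith
  then have "iB + iT < th" using not_T by auto
  then show ?thesis
    using oBS deg th unfolding oA_def oB_def oS_def oT_def iA_def iB_def iS_def iT_def
    by (intro conjI) linarith+
qed

context
  fixes \<epsilon> \<epsilon>\<^sub>1 \<eta>\<^sub>1 \<tau> :: real
  assumes R_large: "2 * \<tau> * N \<le> a0" "2 * \<tau> * N \<le> s0"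
    and R_constants: "10 * d \<le> \<epsilon>\<^sub>1" "10 * d \<le> \<eta>\<^sub>1" "20 * d \<le> \<epsilon> powr (1/3)"
      "100 * \<eta>\<^sub>1 \<le> \<tau>" "\<tau> \<le> 1/100"
begin

abbreviation "fR \<equiv> R_assign \<eta>\<^sub>1"

lemma R_reference_degrees:
  assumes x: "x \<in> V"
  shows "fR x = PA \<Longrightarrow> 2 * \<eta>\<^sub>1 * N \<le> real (outdeg E B0 x) \<and> 2 * \<eta>\<^sub>1 * N \<le> real (indeg E B0 x)"
    and "fR x = PB \<Longrightarrow> 2 * \<eta>\<^sub>1 * N \<le> real (outdeg E A0 x) \<and> 2 * \<eta>\<^sub>1 * N \<le> real (indeg E A0 x)"
    and "fR x = PS \<Longrightarrow> 2 * \<eta>\<^sub>1 * N \<le> real (outdeg E B0 x) + real (outdeg E S0 x)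
                       \<and> 2 * \<eta>\<^sub>1 * N \<le> real (indeg E A0 x) + real (indeg E S0 x)"
    and "fR x = PT \<Longrightarrow> 2 * \<eta>\<^sub>1 * N \<le> real (outdeg E A0 x) + real (outdeg E T0 x)
                       \<and> 2 * \<eta>\<^sub>1 * N \<le> real (indeg E B0 x) + real (indeg E T0 x)"
proof -
  have K: "2 * \<eta>\<^sub>1 * N + 2 * d * N + 1 \<le> a0" "4 * (2 * \<eta>\<^sub>1 * N) + 1 \<le> a0" "4 * (2 * \<eta>\<^sub>1 * N) \<le> N"
    using mult_N_mono[OF R_constants(2)] mult_N_mono[OF R_constants(4)] mult_N_mono[OF R_constants(5)]
      R_large dN_ge_1 sizes by linarith+
  have kept: "fR x = f0 x" if "typ x"
    using that by (simp add: R_assign_def)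
  note deg = typical_degrees[OF _ x]
  show "2 * \<eta>\<^sub>1 * N \<le> real (outdeg E B0 x) \<and> 2 * \<eta>\<^sub>1 * N \<le> real (indeg E B0 x)" if "fR x = PA"
  proof (cases "typ x")
    case True
    then have "f0 x = PA" using kept that by simp
    then show ?thesis using deg(1,2)[OF True] K sizes by (intro conjI) linarith+
  qed (use that in \<open>simp add: R_assign_def split: if_splits\<close>)
  show "2 * \<eta>\<^sub>1 * N \<le> real (outdeg E A0 x) \<and> 2 * \<eta>\<^sub>1 * N \<le> real (indeg E A0 x)" if "fR x = PB"
  proof (cases "typ x")
    case True
    then have "f0 x = PB" using kept that by simp
    then show ?thesis using deg(3,4)[OF True] K by (intro conjI) linarith+
  qed (use R_fallback[OF x K(2,3)] that in \<open>simp add: R_assign_def split: if_splits\<close>)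
  show "2 * \<eta>\<^sub>1 * N \<le> real (outdeg E B0 x) + real (outdeg E S0 x)
          \<and> 2 * \<eta>\<^sub>1 * N \<le> real (indeg E A0 x) + real (indeg E S0 x)" if "fR x = PS"
  proof (cases "typ x")
    case True
    then have "f0 x = PS" using kept that by simp
    then show ?thesis using deg(5,6)[OF True] K sizes by (intro conjI) linarith+
  qed (use that in \<open>simp add: R_assign_def split: if_splits\<close>)
  show "2 * \<eta>\<^sub>1 * N \<le> real (outdeg E A0 x) + real (outdeg E T0 x)
          \<and> 2 * \<eta>\<^sub>1 * N \<le> real (indeg E B0 x) + real (indeg E T0 x)" if "fR x = PT"
  proof (cases "typ x")
    case True
    then have "f0 x = PT" using kept that by simp
    then show ?thesis using deg(7,8)[OF True] K sizes by (intro conjI) linarith+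
  qed (use that in \<open>simp add: R_assign_def split: if_splits\<close>)
qed

lemma R_moved: "real (card (moved V fR f0)) \<le> 4 * d * N"
  by (rule card_moved_le) (simp add: R_assign_def)

lemmas R_scale = mult_N_mono[OF R_constants(1)] mult_N_mono[OF R_constants(2)]
  mult_N_mono[OF R_constants(3)] mult_N_mono[OF R_constants(4)]

lemma R_sizes:
  "\<tau> * N \<le> real (card (block V fR PA))" "\<tau> * N \<le> real (card (block V fR PB))"
  "\<tau> * N \<le> real (card (block V fR PS))" "\<tau> * N \<le> real (card (block V fR PT))"
  "\<bar>real (card (block V fR PA)) - real (card (block V fR PB))\<bar> \<le> \<epsilon>\<^sub>1 * N"
  "\<bar>real (card (block V fR PS)) - real (card (block V fR PT))\<bar> \<le> \<epsilon>\<^sub>1 * N"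
  using card_block_shift[OF finite_V R_moved, of PA] card_block_shift[OF finite_V R_moved, of PB]
    card_block_shift[OF finite_V R_moved, of PS] card_block_shift[OF finite_V R_moved, of PT]
    R_large sizes dN_ge_1 R_scale
  unfolding abs_le_iff by linarith+

lemma R_min_degrees:
  "bip_semideg_ge E (block V fR PA) (block V fR PB) (\<eta>\<^sub>1 * N)"
  "\<forall>x\<in>block V fR PS. \<eta>\<^sub>1 * N \<le> real (outdeg E (block V fR PB \<union> block V fR PS) x)
                     \<and> \<eta>\<^sub>1 * N \<le> real (indeg E (block V fR PA \<union> block V fR PS) x)"
  "\<forall>x\<in>block V fR PT. \<eta>\<^sub>1 * N \<le> real (outdeg E (block V fR PA \<union> block V fR PT) x)
                     \<and> \<eta>\<^sub>1 * N \<le> real (indeg E (block V fR PB \<union> block V fR PT) x)"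
proof -
  note out_sh = outdeg_block_shift[OF finite_V R_moved, of E] and in_sh = indeg_block_shift[OF finite_V R_moved, of E]
  note Un = outdeg_block_Un[OF finite_V] indeg_block_Un[OF finite_V]
  have x: "x \<in> V" "fR x = p" if "x \<in> block V fR p" for x p
    using that by (simp_all add: block_def)
  show "bip_semideg_ge E (block V fR PA) (block V fR PB) (\<eta>\<^sub>1 * N)"
    unfolding bip_semideg_ge_def
  proof (intro conjI ballI)
    fix x assume "x \<in> block V fR PA"
    then have "2 * \<eta>\<^sub>1 * N \<le> real (outdeg E B0 x) \<and> 2 * \<eta>\<^sub>1 * N \<le> real (indeg E B0 x)"
      using R_reference_degrees(1) x by blast
    then show "\<eta>\<^sub>1 * N \<le> real (outdeg E (block V fR PB) x)" "\<eta>\<^sub>1 * N \<le> real (indeg E (block V fR PB) x)"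
      using out_sh[of PB x] in_sh[of PB x] R_scale by linarith+
  next
    fix x assume "x \<in> block V fR PB"
    then have "2 * \<eta>\<^sub>1 * N \<le> real (outdeg E A0 x) \<and> 2 * \<eta>\<^sub>1 * N \<le> real (indeg E A0 x)"
      using R_reference_degrees(2) x by blast
    then show "\<eta>\<^sub>1 * N \<le> real (outdeg E (block V fR PA) x)" "\<eta>\<^sub>1 * N \<le> real (indeg E (block V fR PA) x)"
      using out_sh[of PA x] in_sh[of PA x] R_scale by linarith+
  qed
  show "\<forall>x\<in>block V fR PS. \<eta>\<^sub>1 * N \<le> real (outdeg E (block V fR PB \<union> block V fR PS) x)
                     \<and> \<eta>\<^sub>1 * N \<le> real (indeg E (block V fR PA \<union> block V fR PS) x)"
  proof
    fix x assume "x \<in> block V fR PS"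
    then have "2 * \<eta>\<^sub>1 * N \<le> real (outdeg E B0 x) + real (outdeg E S0 x)
             \<and> 2 * \<eta>\<^sub>1 * N \<le> real (indeg E A0 x) + real (indeg E S0 x)"
      using R_reference_degrees(3) x by blast
    then show "\<eta>\<^sub>1 * N \<le> real (outdeg E (block V fR PB \<union> block V fR PS) x)
             \<and> \<eta>\<^sub>1 * N \<le> real (indeg E (block V fR PA \<union> block V fR PS) x)"
      using out_sh[of PB x] out_sh[of PS x] in_sh[of PA x] in_sh[of PS x] R_scale by (simp add: Un)
  qed
  show "\<forall>x\<in>block V fR PT. \<eta>\<^sub>1 * N \<le> real (outdeg E (block V fR PA \<union> block V fR PT) x)
                     \<and> \<eta>\<^sub>1 * N \<le> real (indeg E (block V fR PB \<union> block V fR PT) x)"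
  proof
    fix x assume "x \<in> block V fR PT"
    then have "2 * \<eta>\<^sub>1 * N \<le> real (outdeg E A0 x) + real (outdeg E T0 x)
             \<and> 2 * \<eta>\<^sub>1 * N \<le> real (indeg E B0 x) + real (indeg E T0 x)"
      using R_reference_degrees(4) x by blast
    then show "\<eta>\<^sub>1 * N \<le> real (outdeg E (block V fR PA \<union> block V fR PT) x)
             \<and> \<eta>\<^sub>1 * N \<le> real (indeg E (block V fR PB \<union> block V fR PT) x)"
      using out_sh[of PA x] out_sh[of PT x] in_sh[of PB x] in_sh[of PT x] R_scale by (simp add: Un)
  qed
qed

lemma R_exceptions:
  "real (card {x \<in> block V fR PA. \<not> (real (card (block V fR PB)) - \<epsilon> powr (1/3) * N \<le> real (outdeg E (block V fR PB) x)
      \<and> real (card (block V fR PB)) - \<epsilon> powr (1/3) * N \<le> real (indeg E (block V fR PB) x))}) \<le> \<epsilon>\<^sub>1 * N"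
  "real (card {x \<in> block V fR PB. \<not> (real (card (block V fR PA)) - \<epsilon> powr (1/3) * N \<le> real (outdeg E (block V fR PA) x)
      \<and> real (card (block V fR PA)) - \<epsilon> powr (1/3) * N \<le> real (indeg E (block V fR PA) x))}) \<le> \<epsilon>\<^sub>1 * N"
  "real (card {x \<in> block V fR PS. \<not> (real (card (block V fR PB)) + real (card (block V fR PS)) - \<epsilon> powr (1/3) * N
        \<le> real (outdeg E (block V fR PB \<union> block V fR PS) x)
      \<and> real (card (block V fR PA)) + real (card (block V fR PS)) - \<epsilon> powr (1/3) * N
        \<le> real (indeg E (block V fR PA \<union> block V fR PS) x))}) \<le> \<epsilon>\<^sub>1 * N"
  "real (card {x \<in> block V fR PT. \<not> (real (card (block V fR PA)) + real (card (block V fR PT)) - \<epsilon> powr (1/3) * N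
        \<le> real (outdeg E (block V fR PA \<union> block V fR PT) x)
      \<and> real (card (block V fR PB)) + real (card (block V fR PT)) - \<epsilon> powr (1/3) * N
        \<le> real (indeg E (block V fR PB \<union> block V fR PT) x))}) \<le> \<epsilon>\<^sub>1 * N"
proof -
  have exceptions: "real (card {x \<in> block V fR p. \<not> P x}) \<le> \<epsilon>\<^sub>1 * N"
    if "\<And>x. x \<in> V \<Longrightarrow> typ x \<Longrightarrow> f0 x = p \<Longrightarrow> P x" for p P
    using card_exceptions_le[of "block V fR p" P] that R_scale(1)
    by (auto simp: block_def R_assign_def)
  note complete = typical_near_complete[OF R_moved]
  show "real (card {x \<in> block V fR PA. \<not> (real (card (block V fR PB)) - \<epsilon> powr (1/3) * N \<le> real (outdeg E (block V fR PB) x)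
      \<and> real (card (block V fR PB)) - \<epsilon> powr (1/3) * N \<le> real (indeg E (block V fR PB) x))}) \<le> \<epsilon>\<^sub>1 * N"
    by (rule exceptions) (use complete(1) R_scale in fastforce)
  show "real (card {x \<in> block V fR PB. \<not> (real (card (block V fR PA)) - \<epsilon> powr (1/3) * N \<le> real (outdeg E (block V fR PA) x)
      \<and> real (card (block V fR PA)) - \<epsilon> powr (1/3) * N \<le> real (indeg E (block V fR PA) x))}) \<le> \<epsilon>\<^sub>1 * N"
    by (rule exceptions) (use complete(2) R_scale in fastforce)
  show "real (card {x \<in> block V fR PS. \<not> (real (card (block V fR PB)) + real (card (block V fR PS)) - \<epsilon> powr (1/3) * N
        \<le> real (outdeg E (block V fR PB \<union> block V fR PS) x)
      \<and> real (card (block V fR PA)) + real (card (block V fR PS)) - \<epsilon> powr (1/3) * N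
        \<le> real (indeg E (block V fR PA \<union> block V fR PS) x))}) \<le> \<epsilon>\<^sub>1 * N"
    by (rule exceptions) (use complete(3) R_scale in fastforce)
  show "real (card {x \<in> block V fR PT. \<not> (real (card (block V fR PA)) + real (card (block V fR PT)) - \<epsilon> powr (1/3) * N
        \<le> real (outdeg E (block V fR PA \<union> block V fR PT) x)
      \<and> real (card (block V fR PB)) + real (card (block V fR PT)) - \<epsilon> powr (1/3) * N
        \<le> real (indeg E (block V fR PB \<union> block V fR PT) x))}) \<le> \<epsilon>\<^sub>1 * N"
    by (rule exceptions) (use complete(4) R_scale in fastforce)
qed

lemma condR_case: "condR \<epsilon> \<epsilon>\<^sub>1 \<eta>\<^sub>1 \<tau> V E (block V fR PA) (block V fR PB) (block V fR PS) (block V fR PT)"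
  using R_sizes R_min_degrees R_exceptions unfolding condR_def Let_def by blast

end

lemma partition_exists:
  assumes c: "20 * d \<le> \<epsilon> powr (1/3)" "10 * d \<le> \<epsilon>\<^sub>1" "\<epsilon>\<^sub>1 \<le> \<eta>\<^sub>1" "100 * \<eta>\<^sub>1 \<le> \<tau>"
    "100 * \<tau> \<le> \<epsilon>\<^sub>3" "100 * \<epsilon>\<^sub>3 \<le> \<eta>\<^sub>2" "\<eta>\<^sub>2 \<le> 1/100"
  shows "\<exists>A B S T. partition4 V A B S T \<and>
          (condP \<epsilon>\<^sub>3 \<eta>\<^sub>2 V E A B S T \<or> (condQ \<epsilon>\<^sub>3 V E A B S T \<and> card A \<le> card B) \<or>
           condR \<epsilon> \<epsilon>\<^sub>1 \<eta>\<^sub>1 \<tau> V E A B S T)"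
proof -
  have c': "10 * d \<le> \<tau>" "10 * d \<le> \<eta>\<^sub>1" "\<epsilon>\<^sub>3 \<le> 1/100" "\<tau> \<le> 1/100"
    using c d_pos by linarith+
  consider "a0 \<le> 2 * \<tau> * N" | "s0 \<le> 2 * \<tau> * N" | "2 * \<tau> * N \<le> a0" "2 * \<tau> * N \<le> s0"
    by linarith
  then show ?thesis
  proof cases
    case 1
    then show ?thesis using condP_case[OF 1 c'(1) c(5-7)] partition4_blocks by blast
  next
    case 2
    then show ?thesis using condQ_case[OF 2 c'(1) c(5) c'(3)] by blast
  next
    case 3
    then show ?thesis
      using condR_case[OF 3 c(2) c'(2) c(1) c(4) c'(4)] partition4_blocks by blast
  qed
qed

end

lemma extremal_partition_exists:
  fixes V :: "nat set" and d :: real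
  assumes dg: "digraph V E" and deg: "semideg_ge E V (real (card V) / 2)"
    and ex: "extremal (d\<^sup>2) V E" and d: "0 < d" "d \<le> 1" "1 \<le> d\<^sup>2 * real (card V)"
    and c: "20 * d \<le> (d\<^sup>2) powr (1/3)" "10 * d \<le> \<epsilon>\<^sub>1" "\<epsilon>\<^sub>1 \<le> \<eta>\<^sub>1" "100 * \<eta>\<^sub>1 \<le> \<tau>"
      "100 * \<tau> \<le> \<epsilon>\<^sub>3" "100 * \<epsilon>\<^sub>3 \<le> \<eta>\<^sub>2" "\<eta>\<^sub>2 \<le> 1/100"
  shows "\<exists>A B S T. partition4 V A B S T \<and>
          (condP \<epsilon>\<^sub>3 \<eta>\<^sub>2 V E A B S T \<or> (condQ \<epsilon>\<^sub>3 V E A B S T \<and> card A \<le> card B) \<or>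
           condR (d\<^sup>2) \<epsilon>\<^sub>1 \<eta>\<^sub>1 \<tau> V E A B S T)"
proof -
  obtain A0 B0 S0 T0 where P0: "partition4 V A0 B0 S0 T0"
    and bal: "\<bar>real (card A0) - real (card B0)\<bar> \<le> 1" "\<bar>real (card S0) - real (card T0)\<bar> \<le> 1"
    and sparse: "real (ecount E (A0 \<union> S0) (A0 \<union> T0)) < d\<^sup>2 * (real (card V))\<^sup>2"
    using ex unfolding extremal_def by blast
  obtain f0 where "block V f0 PA = A0" "block V f0 PB = B0" "block V f0 PS = S0" "block V f0 PT = T0"
    using partition4_obtain_blocks[OF P0] .
  then interpret extremal_reference V E f0 d
    using dg deg bal sparse d by unfold_locales (auto simp: digraph_def)
  show ?thesis by (rule partition_exists[OF c])
qed

lemma small_sqrt_bounds: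
  fixes \<epsilon> \<epsilon>\<^sub>1 :: real
  assumes \<epsilon>: "0 < \<epsilon>" "\<epsilon> < (\<epsilon>\<^sub>1 / 100) ^ 6" and \<epsilon>\<^sub>1: "0 < \<epsilon>\<^sub>1" "\<epsilon>\<^sub>1 \<le> 1"
  shows "20 * sqrt \<epsilon> \<le> \<epsilon> powr (1/3)" "10 * sqrt \<epsilon> \<le> \<epsilon>\<^sub>1" "sqrt \<epsilon> \<le> 1"
proof -
  define u where "u = \<epsilon> powr (1/6)"
  have u: "0 < u" "u ^ 2 = \<epsilon> powr (1/3)" "u ^ 3 = sqrt \<epsilon>"
    using \<epsilon>(1) unfolding u_def by (simp_all add: powr_power powr_half_sqrt[symmetric])
  have sixth: "(\<epsilon>\<^sub>1 / 100) ^ 6 = (\<epsilon>\<^sub>1 / 100) powr 6"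
    using powr_realpow[of "\<epsilon>\<^sub>1 / 100" 6] \<epsilon>\<^sub>1(1) by simp
  have "((\<epsilon>\<^sub>1 / 100) ^ 6) powr (1/6) = \<epsilon>\<^sub>1 / 100"
    unfolding sixth powr_powr using \<epsilon>\<^sub>1(1) by simp
  then have small: "u < \<epsilon>\<^sub>1 / 100"
    unfolding u_def using powr_less_mono2[of "1/6" \<epsilon> "(\<epsilon>\<^sub>1 / 100) ^ 6"] \<epsilon> by simp
  have u1: "u \<le> 1/100" using small \<epsilon>\<^sub>1(2) by linarith
  have "u ^ 3 = u * u\<^sup>2" "u\<^sup>2 = u * u" by (simp_all add: power2_eq_square power3_eq_cube)
  moreover have "u * u\<^sup>2 \<le> (1/100) * u\<^sup>2" "u * u \<le> 1 * u"
    using mult_right_mono[OF u1, of "u\<^sup>2"] mult_right_mono[of u 1 u] u1 u(1) by simp_all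
  ultimately show "20 * sqrt \<epsilon> \<le> \<epsilon> powr (1/3)" "10 * sqrt \<epsilon> \<le> \<epsilon>\<^sub>1" "sqrt \<epsilon> \<le> 1"
    using u small \<epsilon>\<^sub>1 u1 zero_le_power2[of u] by linarith+
qed

text \<open>Each constant of the hierarchy is taken a hundredth of the next larger one, and
  \<epsilon> < (\<epsilon>1/100)^6 makes d = \<surd>\<epsilon> small compared with \<epsilon>1 and \<epsilon>^(1/3).\<close>

lemma partition_for_hierarchy:
  fixes \<eta>\<^sub>2 \<epsilon>\<^sub>3 \<tau> \<eta>\<^sub>1 \<epsilon>\<^sub>1 \<epsilon> :: real
  assumes c: "0 < \<eta>\<^sub>2" "\<eta>\<^sub>2 < 1/100" "0 < \<epsilon>\<^sub>3" "\<epsilon>\<^sub>3 < \<eta>\<^sub>2 / 100" "0 < \<tau>" "\<tau> < \<epsilon>\<^sub>3 / 100"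
      "0 < \<eta>\<^sub>1" "\<eta>\<^sub>1 < \<tau> / 100" "0 < \<epsilon>\<^sub>1" "\<epsilon>\<^sub>1 < \<eta>\<^sub>1" "0 < \<epsilon>" "\<epsilon> < (\<epsilon>\<^sub>1 / 100) ^ 6"
    and G: "digraph V E" "nat \<lceil>1 / \<epsilon>\<rceil> \<le> card V" "extremal \<epsilon> V E"
      "semideg_ge E V (real (card V) / 2)"
  shows "\<exists>A B S T. partition4 V A B S T \<and>
          (condP \<epsilon>\<^sub>3 \<eta>\<^sub>2 V E A B S T \<or> (condQ \<epsilon>\<^sub>3 V E A B S T \<and> card A \<le> card B) \<or>
           condR \<epsilon> \<epsilon>\<^sub>1 \<eta>\<^sub>1 \<tau> V E A B S T)"
proof -
  have sq: "(sqrt \<epsilon>)\<^sup>2 = \<epsilon>" using c(11) by simp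
  have "1 / \<epsilon> \<le> real (card V)" using G(2) by linarith
  then have "1 \<le> (sqrt \<epsilon>)\<^sup>2 * real (card V)" using c(11) unfolding sq by (simp add: field_simps)
  moreover note small_sqrt_bounds[OF c(11,12,9)]
  ultimately show ?thesis
    using extremal_partition_exists[of V E "sqrt \<epsilon>" \<epsilon>\<^sub>1 \<eta>\<^sub>1 \<tau> \<epsilon>\<^sub>3 \<eta>\<^sub>2] G c unfolding sq
    by (force intro!: real_sqrt_gt_zero)
qed

theorem proposition4p5:
  shows "\<exists>eta2_0>0. \<forall>eta2::real. 0 < eta2 \<and> eta2 < eta2_0 \<longrightarrow>
    (\<exists>eps3_0>0. \<forall>eps3::real. 0 < eps3 \<and> eps3 < eps3_0 \<longrightarrow>
    (\<exists>tau_0>0. \<forall>tau::real. 0 < tau \<and> tau < tau_0 \<longrightarrow>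
    (\<exists>eta1_0>0. \<forall>eta1::real. 0 < eta1 \<and> eta1 < eta1_0 \<longrightarrow>
    (\<exists>eps1_0>0. \<forall>eps1::real. 0 < eps1 \<and> eps1 < eps1_0 \<longrightarrow>
    (\<exists>eps_0>0. \<forall>eps::real. 0 < eps \<and> eps < eps_0 \<longrightarrow>
    (\<exists>n_0::nat. \<forall>(V::nat set) (E::(nat \<times> nat) set).
       digraph V E \<and> card V \<ge> n_0 \<and> extremal eps V E \<and>
       semideg_ge E V (real (card V) / 2) \<longrightarrow>
       (\<exists>A B S T. partition4 V A B S T \<and>
          (condP eps3 eta2 V E A B S T \<or>
           (condQ eps3 V E A B S T \<and> card A \<le> card B) \<or>
           condR eps eps1 eta1 tau V E A B S T))))))))"
  apply (rule exI[of _ "1/100"], intro conjI allI impI, simp)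
  apply (rule_tac x = "eta2 / 100" in exI, intro conjI allI impI, simp)
  apply (rule_tac x = "eps3 / 100" in exI, intro conjI allI impI, simp)
  apply (rule_tac x = "tau / 100" in exI, intro conjI allI impI, simp)
  apply (rule_tac x = eta1 in exI, intro conjI allI impI, simp)
  apply (rule_tac x = "(eps1 / 100) ^ 6" in exI, intro conjI allI impI, simp)
  apply (rule_tac x = "nat \<lceil>1 / eps\<rceil>" in exI, intro allI impI)
  by (rule partition_for_hierarchy) auto

end
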